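(* Let $T>0$, $0<\epsilon\le1$, $I=(0,1)$, $\kappa^0\in\mathrm{Lip}(I)$, $\rho^0\in C_0^\infty(I)$, and let $\hat g$ be as in the context. Let $$c_1=\|(\rho^0_{xx})^2\|_{L^\infty(I)}+\|\rho^0_x\|_{L^\infty(I)}\|\rho^0_{xxx}\|_{L^\infty(I)},\qquad c_2=(\|\kappa^0_x\|_{L^\infty(I)}+1)^2,$$ and $\bar S(x,t)=\sqrt{2c_1t+c_2}$. Then $\bar S$ is an entropy super-solution of $w_t+(\hat g\,f_\epsilon(w))_x=0$ in $Q_T$ with initial datum $w(\cdot,0)=\|\kappa^0_x\|_{L^\infty(I)}+1$.
   Context: $Q_T=\mathbb{R}\times(0,T)$. $\rho$ solves $\rho_t=\rho_{xx}$ in $I\times(0,\infty)$, $\rho(\cdot,0)=\rho^0$, $\rho(0,t)=\rho(1,t)=0$; $\hat\rho$ equals $\rho$ on $[0,1]\times[0,T]$, $\hat\rho(x,t)=-\rho(2-x,t)$ for $x\in(1,2]$, extended $2$-periodically in $x$ to $\mathbb{R}\times[0,T]$; $\hat g=-\hat\rho_t\hat\rho_x$. For $a>0$, $f_a(x)=1/x$ if $x\ge a$, $f_a(x)=\frac{2a-x}{a^2+a^2(x-a)^2}$ if $x<a$. Entropy super-solution of $v_t+(gf(v))_x=0$, $v(\cdot,0)=v^0$: $v\in L^\infty(Q_T)$ with $\int_{Q_T}[\eta(v)\phi_t+\Phi(v)g\phi_x+h(v)g_x\phi]\,dx\,dt+\int_{\mathbb{R}}\eta(v^0)\phi(x,0)\,dx\ge0$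 for every $\phi\in C_0^1(\mathbb{R}\times[0,T);[0,\infty))$, every non-increasing convex $\eta\in C^1$, $\Phi\in C^1$ with $\Phi'=f'\eta'$ and $h=\Phi-f\eta'$. *)

theory Defs
  imports "HOL-Analysis.Analysis" "HOL-Probability.Essential_Supremum"
begin

definition I_int :: "real set" where "I_int = {0<..<1}"

definition Linf_I :: "(real \<Rightarrow> real) \<Rightarrow> real" where
  "Linf_I u = real_of_ereal (esssup (lebesgue_on I_int) (\<lambda>x. ereal \<bar>u x\<bar>))"

definition C0_inf_I :: "(real \<Rightarrow> real) \<Rightarrow> bool" where
  "C0_inf_I u \<longleftrightarrow> (\<forall>n. \<forall>x. ((deriv ^^ n) u) differentiable (at x))
      \<and> (\<exists>a b. 0 < a \<and> a \<le> b \<and> b < 1 \<and> (\<forall>x. x \<notin> {a..b} \<longrightarrow> u x = 0))"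

definition Lip_I :: "(real \<Rightarrow> real) \<Rightarrow> bool" where
  "Lip_I u \<longleftrightarrow> (\<exists>L. L-lipschitz_on I_int u)"

definition heat_solution :: "(real \<Rightarrow> real \<Rightarrow> real) \<Rightarrow> (real \<Rightarrow> real) \<Rightarrow> bool" where
  "heat_solution \<rho> \<rho>0 \<longleftrightarrow>
     continuous_on ({0..1} \<times> {0..}) (\<lambda>(x,t). \<rho> x t)
   \<and> (\<forall>x\<in>{0..1}. \<rho> x 0 = \<rho>0 x)
   \<and> (\<forall>t>0. \<rho> 0 t = 0 \<and> \<rho> 1 t = 0)
   \<and> (\<forall>x\<in>{0<..<1}. \<forall>t>0.
        (\<forall>y\<in>{0<..<1}. (\<lambda>z. \<rho> z t) differentiable (at y))
      \<and> (\<lambda>y. deriv (\<lambda>z. \<rho> z t) y) differentiable (at x)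
      \<and> ((\<lambda>s. \<rho> x s) has_real_derivative
            deriv (\<lambda>y. deriv (\<lambda>z. \<rho> z t) y) x) (at t))"

text \<open>Odd reflection across x = 1 and 2-periodic extension.\<close>
definition rho_hat :: "(real \<Rightarrow> real \<Rightarrow> real) \<Rightarrow> real \<Rightarrow> real \<Rightarrow> real" where
  "rho_hat \<rho> x t = (let y = x - 2 * of_int \<lfloor>x / 2\<rfloor> in
      if y \<le> 1 then \<rho> y t else - \<rho> (2 - y) t)"

definition g_hat :: "(real \<Rightarrow> real \<Rightarrow> real) \<Rightarrow> real \<Rightarrow> real \<Rightarrow> real" where
  "g_hat \<rho> x t = - (deriv (\<lambda>s. rho_hat \<rho> x s) t * deriv (\<lambda>y. rho_hat \<rho> y t) x)"

definition f_a :: "real \<Rightarrow> real \<Rightarrow> real" where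
  "f_a a x = (if x \<ge> a then 1 / x else (2 * a - x) / (a\<^sup>2 + a\<^sup>2 * (x - a)\<^sup>2))"

text \<open>Test functions in C_0^1(R x [0,T); [0,inf)), given with their partial derivatives.\<close>
definition test_fun :: "real \<Rightarrow> (real \<Rightarrow> real \<Rightarrow> real) \<Rightarrow> (real \<Rightarrow> real \<Rightarrow> real)
    \<Rightarrow> (real \<Rightarrow> real \<Rightarrow> real) \<Rightarrow> bool" where
  "test_fun T \<phi> \<phi>x \<phi>t \<longleftrightarrow>
     (\<forall>x. \<forall>t\<in>{0..<T}. \<phi> x t \<ge> 0)
   \<and> (\<forall>x. \<forall>t\<in>{0..<T}. ((\<lambda>y. \<phi> y t) has_real_derivative \<phi>x x t) (at x))
   \<and> (\<forall>x. \<forall>t\<in>{0..<T}. ((\<lambda>s. \<phi> x s) has_real_derivative \<phi>t x t) (at t within {0..<T}))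
   \<and> continuous_on (UNIV \<times> {0..<T}) (\<lambda>(x,t). \<phi> x t)
   \<and> continuous_on (UNIV \<times> {0..<T}) (\<lambda>(x,t). \<phi>x x t)
   \<and> continuous_on (UNIV \<times> {0..<T}) (\<lambda>(x,t). \<phi>t x t)
   \<and> (\<exists>K. compact K \<and> K \<subseteq> UNIV \<times> {0..<T}
          \<and> (\<forall>x. \<forall>t\<in>{0..<T}. (x, t) \<notin> K \<longrightarrow> \<phi> x t = 0))"

definition entropy_pair :: "(real \<Rightarrow> real) \<Rightarrow> (real \<Rightarrow> real) \<Rightarrow> (real \<Rightarrow> real)
    \<Rightarrow> (real \<Rightarrow> real) \<Rightarrow> bool" where
  "entropy_pair f \<eta> \<eta>' \<Phi> \<longleftrightarrow>
     (\<forall>u. (\<eta> has_real_derivative \<eta>' u) (at u)) \<and> continuous_on UNIV \<eta>'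
   \<and> antimono \<eta> \<and> convex_on UNIV \<eta>
   \<and> (\<forall>u. (\<Phi> has_real_derivative (deriv f u * \<eta>' u)) (at u))
   \<and> continuous_on UNIV (\<lambda>u. deriv f u * \<eta>' u)"

definition Q_T :: "real \<Rightarrow> (real \<times> real) set" where
  "Q_T T = UNIV \<times> {0<..<T}"

text \<open>Entropy super-solution of v_t + (g f(v))_x = 0 in Q_T with v(.,0) = v0;
  gx is the x-derivative of g. The integrands are required to be integrable.\<close>
definition entropy_supersol :: "real \<Rightarrow> (real \<Rightarrow> real \<Rightarrow> real) \<Rightarrow> (real \<Rightarrow> real \<Rightarrow> real)
    \<Rightarrow> (real \<Rightarrow> real) \<Rightarrow> (real \<Rightarrow> real \<Rightarrow> real) \<Rightarrow> (real \<Rightarrow> real) \<Rightarrow> bool" where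
  "entropy_supersol T g gx f v v0 \<longleftrightarrow>
     (\<lambda>(x,t). v x t) \<in> borel_measurable (lebesgue_on (Q_T T))
   \<and> (\<exists>M. AE p in lebesgue_on (Q_T T). \<bar>(\<lambda>(x,t). v x t) p\<bar> \<le> M)
   \<and> (\<forall>\<phi> \<phi>x \<phi>t \<eta> \<eta>' \<Phi>. test_fun T \<phi> \<phi>x \<phi>t \<longrightarrow> entropy_pair f \<eta> \<eta>' \<Phi> \<longrightarrow>
        (let h = (\<lambda>u. \<Phi> u - f u * \<eta>' u);
             F = (\<lambda>(x,t). \<eta> (v x t) * \<phi>t x t + \<Phi> (v x t) * g x t * \<phi>x x t
                          + h (v x t) * gx x t * \<phi> x t);
             G = (\<lambda>x. \<eta> (v0 x) * \<phi> x 0)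
         in integrable (lebesgue_on (Q_T T)) F \<and> integrable lebesgue G
            \<and> (integral\<^sup>L (lebesgue_on (Q_T T)) F) + (integral\<^sup>L lebesgue G) \<ge> 0))"

end

theory Submission
  imports Defs "HOL-Probability.Distributions" "HOL-Real_Asymp.Real_Asymp"
begin

(* Extended oddly and 2-periodically, rho^0 generates through the Gaussian kernel a solution of the heat
   equation on the line. On [0, 1] it has the initial and boundary values of rho, so by the maximum
   principle it coincides with rho, and rho_hat is this Gaussian average. Each space derivative of rho_hat
   is then a Gaussian average of the corresponding derivative of rho^0, bounded by its sup norm; hence
   (g_hat)_x = - (rho_hat_xxx rho_hat_x + rho_hat_xx^2) >= - c1.
   The candidate S(t) = sqrt (2 c1 t + c2) is at least 1, so f_eps(S) = 1/S, and S' = c1/S. In the entropy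
   integrand the terms (eta(S) phi)_t and (Phi(S) g_hat phi)_x integrate to - \<integral> eta(S(0)) phi(x, 0) dx
   and 0; the remainder - eta'(S) phi (c1 + (g_hat)_x) / S is nonnegative since eta is non-increasing. *)

section \<open>Gaussian averages\<close>

lemma integrable_std_normal_density: "integrable lborel std_normal_density"
  using integrable_std_normal_moment[of 0] by simp

lemma integral_std_normal_density: "(\<integral>w. std_normal_density w \<partial>lborel) = 1"
  using integral_std_normal_moment_even[of 0] by simp

lemma integrable_std_normal_density_abs: "integrable lborel (\<lambda>w. std_normal_density w * \<bar>w\<bar>)"
  using integrable_std_normal_moment_abs[of 1] by simp

lemma continuous_on_std_normal_density: "continuous_on UNIV std_normal_density"
  unfolding std_normal_density_def by (intro continuous_intros) auto

lemma std_normal_density_has_derivative: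
  "(std_normal_density has_real_derivative - w * std_normal_density w) (at w)"
  unfolding std_normal_density_def
  by (auto intro!: derivative_eq_intros simp: power2_eq_square field_simps)

lemma std_normal_density_tendsto_0:
  "(std_normal_density \<longlongrightarrow> 0) at_top" "(std_normal_density \<longlongrightarrow> 0) at_bot"
  unfolding std_normal_density_def by real_asymp+

lemma std_normal_density_minus: "std_normal_density (- w) = std_normal_density w"
  by (simp add: std_normal_density_def)

lemma tendsto_lborel_integral_dominated:
  fixes S :: "'p::first_countable_topology \<Rightarrow> real \<Rightarrow> real"
  assumes S: "\<And>p. S p \<in> borel_measurable lborel" and L: "L \<in> borel_measurable lborel"
    and W: "integrable lborel W"
    and lim: "\<And>w. ((\<lambda>p. S p w) \<longlongrightarrow> L w) (at p0 within X)"
    and bound: "\<And>p w. \<bar>S p w\<bar> \<le> W w"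
  shows "((\<lambda>p. \<integral>w. S p w \<partial>lborel) \<longlongrightarrow> (\<integral>w. L w \<partial>lborel)) (at p0 within X)"
  unfolding tendsto_at_iff_sequentially comp_def
proof (intro allI impI)
  fix P :: "nat \<Rightarrow> 'p" assume "\<forall>i. P i \<in> X - {p0}" and "P \<longlonglongrightarrow> p0"
  then have "(\<lambda>i. S (P i) w) \<longlonglongrightarrow> L w" for w
    using lim[of w] unfolding tendsto_at_iff_sequentially comp_def by blast
  then show "(\<lambda>i. \<integral>w. S (P i) w \<partial>lborel) \<longlonglongrightarrow> (\<integral>w. L w \<partial>lborel)"
    by (intro integral_dominated_convergence[where w=W] AE_I2 S L W) (simp_all add: bound)
qed

lemma integral_eq_0_if_antiderivative_vanishes_at_infinity:
  fixes F f :: "real \<Rightarrow> real"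
  assumes F: "\<And>w. (F has_real_derivative f w) (at w)" and f: "continuous_on UNIV f"
    and "integrable lborel f" and "(F \<longlongrightarrow> 0) at_top" and "(F \<longlongrightarrow> 0) at_bot"
  shows "(\<integral>w. f w \<partial>lborel) = 0"
proof -
  have FTC: "(\<integral>w. f w * indicator {- real n..real n} w \<partial>lborel) = F (real n) - F (- real n)" for n
    by (rule integral_FTC_Icc_real) (use F f in \<open>auto simp: continuous_on_eq_continuous_at\<close>)
  have "(\<lambda>n. \<integral>w. f w * indicator {- real n..real n} w \<partial>lborel) \<longlonglongrightarrow> (\<integral>w. f w \<partial>lborel)"
  proof (rule integral_dominated_convergence[where w="\<lambda>w. \<bar>f w\<bar>"])
    show "AE w in lborel. (\<lambda>n. f w * indicator {- real n..real n} w) \<longlonglongrightarrow> f w"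
    proof (rule AE_I2, rule tendsto_eventually)
      fix w :: real
      have "\<forall>\<^sub>F n in sequentially. \<bar>w\<bar> \<le> real n"
        using filterlim_real_sequentially by (simp add: filterlim_at_top)
      then show "\<forall>\<^sub>F n in sequentially. f w * indicator {- real n..real n} w = f w"
        by eventually_elim (auto simp: indicator_def)
    qed
    show "\<And>n. AE w in lborel. norm (f w * indicator {- real n..real n} w) \<le> \<bar>f w\<bar>"
      by (auto simp: indicator_def)
  qed (use \<open>integrable lborel f\<close> in auto)
  moreover have "(\<lambda>n. F (real n) - F (- real n)) \<longlonglongrightarrow> 0 - 0"
  proof (rule tendsto_diff)
    show "(\<lambda>n. F (real n)) \<longlonglongrightarrow> 0"
      by (rule filterlim_compose[OF \<open>(F \<longlongrightarrow> 0) at_top\<close> filterlim_real_sequentially])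
    have "filterlim (\<lambda>n. - real n) at_bot sequentially"
      using filterlim_uminus_at_top filterlim_real_sequentially by blast
    then show "(\<lambda>n. F (- real n)) \<longlonglongrightarrow> 0"
      by (rule filterlim_compose[OF \<open>(F \<longlongrightarrow> 0) at_bot\<close>])
  qed
  ultimately show ?thesis using FTC LIMSEQ_unique by fastforce
qed

text \<open>\<open>gauss_avg Q x (sqrt (2 * t))\<close> solves the heat equation on the line with initial datum \<open>Q\<close>.\<close>
definition gauss_avg :: "(real \<Rightarrow> real) \<Rightarrow> real \<Rightarrow> real \<Rightarrow> real" where
  "gauss_avg Q x s = (\<integral>w. std_normal_density w * Q (x - s * w) \<partial>lborel)"

lemma gauss_avg_0 [simp]: "gauss_avg Q x 0 = Q x"
  unfolding gauss_avg_def using integral_std_normal_density by simp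

context
  fixes Q :: "real \<Rightarrow> real" and B :: real
  assumes Q_cont: "continuous_on UNIV Q" and Q_bound: "\<And>y. \<bar>Q y\<bar> \<le> B"
begin

lemma gauss_bound_nonneg: "0 \<le> B"
  using Q_bound[of 0] by linarith

lemma gauss_integrand_abs_le: "\<bar>std_normal_density w * Q y\<bar> \<le> B * std_normal_density w"
  using mult_left_mono[OF Q_bound normal_density_nonneg]
  by (simp add: abs_mult mult.commute)

lemma gauss_integrand_measurable:
  "(\<lambda>w. std_normal_density w * Q (x - s * w)) \<in> borel_measurable lborel"
proof -
  have "continuous_on UNIV (\<lambda>w. Q (x - s * w))"
    by (rule continuous_on_compose2[OF Q_cont]) (auto intro: continuous_intros)
  then have "continuous_on UNIV (\<lambda>w. std_normal_density w * Q (x - s * w))"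
    by (intro continuous_on_mult continuous_on_std_normal_density)
  from borel_measurable_continuous_onI[OF this] show ?thesis by simp
qed

lemma gauss_integrand_integrable:
  "integrable lborel (\<lambda>w. std_normal_density w * Q (x - s * w))"
proof (rule Bochner_Integration.integrable_bound[OF
      integrable_mult_right[OF integrable_std_normal_density] gauss_integrand_measurable])
  show "AE w in lborel. norm (std_normal_density w * Q (x - s * w)) \<le> norm (B * std_normal_density w)"
    using gauss_integrand_abs_le gauss_bound_nonneg by (intro AE_I2) simp
qed

lemma abs_gauss_avg_le: "\<bar>gauss_avg Q x s\<bar> \<le> B"
proof -
  have "\<bar>gauss_avg Q x s\<bar> \<le> (\<integral>w. \<bar>std_normal_density w * Q (x - s * w)\<bar> \<partial>lborel)"
    unfolding gauss_avg_def by (rule integral_abs_bound)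
  also have "\<dots> \<le> (\<integral>w. B * std_normal_density w \<partial>lborel)"
    by (intro integral_mono integrable_abs gauss_integrand_integrable gauss_integrand_abs_le
        integrable_mult_right[OF integrable_std_normal_density])
  finally show ?thesis by (simp add: integral_std_normal_density)
qed

lemma continuous_on_gauss_avg: "continuous_on UNIV (\<lambda>p. gauss_avg Q (fst p) (snd p))"
  unfolding continuous_on_def gauss_avg_def
proof (intro ballI tendsto_lborel_integral_dominated[where W="\<lambda>w. B * std_normal_density w"])
  fix p0 :: "real \<times> real" and w :: real
  have "continuous_on UNIV (\<lambda>p. std_normal_density w * Q (fst p - snd p * w))"
    by (intro continuous_intros continuous_on_compose2[OF Q_cont]) auto
  then show "((\<lambda>p. std_normal_density w * Q (fst p - snd p * w)) \<longlongrightarrow>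
      std_normal_density w * Q (fst p0 - snd p0 * w)) (at p0 within UNIV)"
    unfolding continuous_on_def by (cases p0) auto
qed (rule gauss_integrand_measurable gauss_integrand_abs_le
    integrable_mult_right[OF integrable_std_normal_density])+

lemma gauss_moment_integrable: "integrable lborel (\<lambda>w. - w * std_normal_density w * Q (x - s * w))"
proof (rule Bochner_Integration.integrable_bound[OF integrable_mult_right[OF integrable_std_normal_density_abs]])
  have "continuous_on UNIV (\<lambda>w. Q (x - s * w))"
    by (rule continuous_on_compose2[OF Q_cont]) (auto intro: continuous_intros)
  then have "continuous_on UNIV (\<lambda>w. - w * std_normal_density w * Q (x - s * w))"
    by (intro continuous_intros continuous_on_std_normal_density)
  from borel_measurable_continuous_onI[OF this]
  show "(\<lambda>w. - w * std_normal_density w * Q (x - s * w)) \<in> borel_measurable lborel"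
    by simp
  show "AE w in lborel. norm (- w * std_normal_density w * Q (x - s * w))
      \<le> norm (B * (std_normal_density w * \<bar>w\<bar>))"
  proof (rule AE_I2)
    fix w
    have "\<bar>w\<bar> * \<bar>std_normal_density w * Q (x - s * w)\<bar> \<le> \<bar>w\<bar> * (B * std_normal_density w)"
      by (intro mult_left_mono gauss_integrand_abs_le) simp
    with gauss_bound_nonneg show "norm (- w * std_normal_density w * Q (x - s * w))
        \<le> norm (B * (std_normal_density w * \<bar>w\<bar>))"
      by (simp add: abs_mult mult_ac)
  qed
qed

lemma gauss_avg_diff_quotient:
  "(gauss_avg Q x1 s1 - gauss_avg Q x0 s0) / h =
    (\<integral>w. std_normal_density w * ((Q (x1 - s1 * w) - Q (x0 - s0 * w)) / h) \<partial>lborel)"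
  unfolding gauss_avg_def
  by (simp add: gauss_integrand_integrable right_diff_distrib flip: Bochner_Integration.integral_diff)

lemma gauss_diff_quotient_measurable:
  "(\<lambda>w. std_normal_density w * ((Q (x1 - s1 * w) - Q (x0 - s0 * w)) / h)) \<in> borel_measurable lborel"
  using gauss_integrand_measurable[of x1 s1] gauss_integrand_measurable[of x0 s0]
  by (simp add: right_diff_distrib diff_divide_distrib)

end

context
  fixes Q Q' :: "real \<Rightarrow> real" and B B' :: real
  assumes Q_cont: "continuous_on UNIV Q" and Q_bound: "\<And>y. \<bar>Q y\<bar> \<le> B"
    and Q_deriv: "\<And>y. (Q has_real_derivative Q' y) (at y)"
    and Q'_cont: "continuous_on UNIV Q'" and Q'_bound: "\<And>y. \<bar>Q' y\<bar> \<le> B'"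
begin

lemma abs_diff_quotient_le: "\<bar>(Q y - Q z) / h\<bar> \<le> B' * \<bar>(y - z) / h\<bar>"
  using field_differentiable_bound[of UNIV Q Q' B' y z] Q_deriv Q'_bound
  by (simp add: abs_divide divide_right_mono)

lemma gauss_avg_has_derivative_x:
  "((\<lambda>x. gauss_avg Q x s) has_real_derivative gauss_avg Q' x s) (at x)"
  unfolding DERIV_def gauss_avg_diff_quotient[OF Q_cont Q_bound]
  unfolding gauss_avg_def
proof (rule tendsto_lborel_integral_dominated[where W="\<lambda>w. B' * std_normal_density w"])
  fix w h :: real
  have "((\<lambda>h. (Q (x - s * w + h) - Q (x - s * w)) / h) \<longlongrightarrow> Q' (x - s * w)) (at 0)"
    using Q_deriv unfolding DERIV_def by blast
  then show "((\<lambda>h. std_normal_density w * ((Q (x + h - s * w) - Q (x - s * w)) / h))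
      \<longlongrightarrow> std_normal_density w * Q' (x - s * w)) (at 0)"
    by (intro tendsto_mult_left) (simp add: algebra_simps)
  have "\<bar>(Q (x + h - s * w) - Q (x - s * w)) / h\<bar> \<le> B'"
    using abs_diff_quotient_le[of "x + h - s * w" "x - s * w" h] Q'_bound[of 0]
    by (cases "h = 0") auto
  then have "std_normal_density w * \<bar>(Q (x + h - s * w) - Q (x - s * w)) / h\<bar>
      \<le> std_normal_density w * B'"
    by (intro mult_left_mono) auto
  then show "\<bar>std_normal_density w * ((Q (x + h - s * w) - Q (x - s * w)) / h)\<bar>
      \<le> B' * std_normal_density w"
    by (simp add: abs_mult mult.commute)
qed (rule gauss_diff_quotient_measurable[OF Q_cont Q_bound] gauss_integrand_measurable[OF Q'_cont Q'_bound]
    integrable_mult_right[OF integrable_std_normal_density])+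

lemma gauss_avg_has_derivative_s:
  "((\<lambda>s. gauss_avg Q x s) has_real_derivative
    (\<integral>w. std_normal_density w * (Q' (x - s * w) * - w) \<partial>lborel)) (at s)"
  unfolding DERIV_def gauss_avg_diff_quotient[OF Q_cont Q_bound]
proof (rule tendsto_lborel_integral_dominated[where W="\<lambda>w. B' * (std_normal_density w * \<bar>w\<bar>)"])
  fix w h :: real
  have "((\<lambda>s. Q (x - s * w)) has_real_derivative Q' (x - s * w) * - w) (at s)"
    by (rule DERIV_chain2[OF Q_deriv]) (auto intro!: derivative_eq_intros)
  then show "((\<lambda>h. std_normal_density w * ((Q (x - (s + h) * w) - Q (x - s * w)) / h))
      \<longlongrightarrow> std_normal_density w * (Q' (x - s * w) * - w)) (at 0)"
    unfolding DERIV_def by (intro tendsto_mult_left)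
  have "\<bar>(Q (x - (s + h) * w) - Q (x - s * w)) / h\<bar>
      \<le> B' * \<bar>((x - (s + h) * w) - (x - s * w)) / h\<bar>"
    by (rule abs_diff_quotient_le)
  also have "\<dots> \<le> B' * \<bar>w\<bar>"
    using Q'_bound[of 0] by (cases "h = 0") (auto simp: algebra_simps abs_mult)
  finally have "std_normal_density w * \<bar>(Q (x - (s + h) * w) - Q (x - s * w)) / h\<bar>
      \<le> std_normal_density w * (B' * \<bar>w\<bar>)"
    by (intro mult_left_mono) auto
  then show "\<bar>std_normal_density w * ((Q (x - (s + h) * w) - Q (x - s * w)) / h)\<bar>
      \<le> B' * (std_normal_density w * \<bar>w\<bar>)"
    by (simp add: abs_mult mult_ac)
next
  have "(\<lambda>w. std_normal_density w * Q' (x - s * w) * - w) \<in> borel_measurable lborel"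
    using gauss_integrand_measurable[OF Q'_cont Q'_bound] by measurable
  then show "(\<lambda>w. std_normal_density w * (Q' (x - s * w) * - w)) \<in> borel_measurable lborel"
    by (simp add: mult.assoc)
qed (rule gauss_diff_quotient_measurable[OF Q_cont Q_bound]
    integrable_mult_right[OF integrable_std_normal_density_abs])+

text \<open>Integration by parts against the Gaussian, whose derivative is \<open>- w * std_normal_density w\<close>.\<close>
lemma gauss_moment_eq_gauss_avg_deriv:
  "(\<integral>w. std_normal_density w * (Q (x - s * w) * - w) \<partial>lborel) = s * gauss_avg Q' x s"
proof -
  define F where "F w = std_normal_density w * Q (x - s * w)" for w
  define f where "f w = - w * std_normal_density w * Q (x - s * w)
    - s * (std_normal_density w * Q' (x - s * w))" for w
  have F_deriv: "(F has_real_derivative f w) (at w)" for w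
  proof -
    have "((\<lambda>w. Q (x - s * w)) has_real_derivative Q' (x - s * w) * - s) (at w)"
      by (rule DERIV_chain2[OF Q_deriv]) (auto intro!: derivative_eq_intros)
    from DERIV_mult[OF std_normal_density_has_derivative this] show ?thesis
      unfolding F_def by (rule DERIV_cong) (simp add: f_def algebra_simps)
  qed
  have Q_comp_cont: "continuous_on UNIV (\<lambda>w. Q (x - s * w))"
    and Q'_comp_cont: "continuous_on UNIV (\<lambda>w. Q' (x - s * w))"
    by (auto intro!: continuous_on_compose2[OF Q_cont] continuous_on_compose2[OF Q'_cont]
        continuous_intros)
  have f_integrable: "integrable lborel f"
    unfolding f_def using gauss_moment_integrable[OF Q_cont Q_bound] gauss_integrand_integrable[OF Q'_cont Q'_bound]
    by simp
  have F_lim: "(F \<longlongrightarrow> 0) F'" if "(std_normal_density \<longlongrightarrow> 0) F'" for F'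
  proof (rule Lim_null_comparison[where g="\<lambda>w. B * std_normal_density w"])
    show "\<forall>\<^sub>F w in F'. norm (F w) \<le> B * std_normal_density w"
      unfolding F_def using gauss_integrand_abs_le[OF Q_cont Q_bound] by simp
    show "((\<lambda>w. B * std_normal_density w) \<longlongrightarrow> 0) F'"
      using tendsto_mult_left[OF that, of B] by simp
  qed
  have f_cont: "continuous_on UNIV f"
    unfolding f_def by (intro continuous_intros Q_comp_cont Q'_comp_cont continuous_on_std_normal_density)
  have "(\<integral>w. f w \<partial>lborel) = 0"
    using F_deriv f_cont f_integrable F_lim[OF std_normal_density_tendsto_0(1)]
      F_lim[OF std_normal_density_tendsto_0(2)]
    by (rule integral_eq_0_if_antiderivative_vanishes_at_infinity)
  moreover have "(\<integral>w. std_normal_density w * (Q (x - s * w) * - w) \<partial>lborel)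
      = (\<integral>w. f w + s * (std_normal_density w * Q' (x - s * w)) \<partial>lborel)"
    by (rule Bochner_Integration.integral_cong) (auto simp: f_def algebra_simps)
  moreover have "\<dots> = (\<integral>w. f w \<partial>lborel) + s * gauss_avg Q' x s"
    unfolding gauss_avg_def using f_integrable gauss_integrand_integrable[OF Q'_cont Q'_bound] by simp
  ultimately show ?thesis by simp
qed

end

lemma gauss_avg_heat_equation:
  assumes "0 < t"
    and Q: "continuous_on UNIV Q" "\<And>y. \<bar>Q y\<bar> \<le> B" "\<And>y. (Q has_real_derivative Q' y) (at y)"
    and Q': "continuous_on UNIV Q'" "\<And>y. \<bar>Q' y\<bar> \<le> B'" "\<And>y. (Q' has_real_derivative Q'' y) (at y)"
    and Q'': "continuous_on UNIV Q''" "\<And>y. \<bar>Q'' y\<bar> \<le> B''"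
  shows "((\<lambda>t. gauss_avg Q x (sqrt (2 * t))) has_real_derivative gauss_avg Q'' x (sqrt (2 * t))) (at t)"
proof -
  define s where "s = sqrt (2 * t)"
  have "s > 0" using \<open>0 < t\<close> unfolding s_def by simp
  have "((\<lambda>s. gauss_avg Q x s) has_real_derivative
      (\<integral>w. std_normal_density w * (Q' (x - s * w) * - w) \<partial>lborel)) (at s)"
    by (rule gauss_avg_has_derivative_s[OF Q Q'(1,2)])
  also have "(\<integral>w. std_normal_density w * (Q' (x - s * w) * - w) \<partial>lborel) = s * gauss_avg Q'' x s"
    by (rule gauss_moment_eq_gauss_avg_deriv[OF Q' Q''])
  finally have outer: "((\<lambda>s. gauss_avg Q x s) has_real_derivative s * gauss_avg Q'' x s) (at s)" .
  have inner: "((\<lambda>t. sqrt (2 * t)) has_real_derivative 1 / s) (at t)"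
    using \<open>0 < t\<close> unfolding s_def
    by (auto intro!: derivative_eq_intros simp: field_simps real_sqrt_mult)
  from DERIV_chain2[OF outer[unfolded s_def] inner] \<open>s > 0\<close> show ?thesis
    unfolding s_def by simp
qed

section \<open>A maximum principle for the heat equation on the unit interval\<close>

lemma deriv_nonneg_at_left_max:
  fixes f :: "real \<Rightarrow> real"
  assumes "(f has_real_derivative D) (at t0)" and "a < t0"
    and max: "\<And>s. a \<le> s \<Longrightarrow> s \<le> t0 \<Longrightarrow> f s \<le> f t0"
  shows "0 \<le> D"
proof (rule ccontr)
  assume "\<not> 0 \<le> D"
  then obtain d where "0 < d" and d: "\<And>h. 0 < h \<Longrightarrow> h < d \<Longrightarrow> f t0 < f (t0 - h)"
    using DERIV_neg_dec_left[OF assms(1)] by force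
  define h where "h = min (d / 2) (t0 - a)"
  have "0 < h" "h < d" "h \<le> t0 - a" using \<open>0 < d\<close> \<open>a < t0\<close> by (auto simp: h_def)
  then have "f t0 < f (t0 - h)" "f (t0 - h) \<le> f t0" using d max[of "t0 - h"] by auto
  then show False by simp
qed

lemma second_deriv_nonpos_at_max:
  fixes f f' :: "real \<Rightarrow> real"
  assumes x0: "a < x0" "x0 < b"
    and f': "\<And>y. a < y \<Longrightarrow> y < b \<Longrightarrow> (f has_real_derivative f' y) (at y)"
    and f'': "(f' has_real_derivative D) (at x0)"
    and max: "\<And>y. a < y \<Longrightarrow> y < b \<Longrightarrow> f y \<le> f x0"
  shows "D \<le> 0"
proof (rule ccontr)
  assume "\<not> D \<le> 0"
  have "f' x0 = 0"
  proof (rule DERIV_local_max[OF f'[OF x0]])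
    show "0 < min (x0 - a) (b - x0)" using x0 by simp
    show "\<forall>y. \<bar>x0 - y\<bar> < min (x0 - a) (b - x0) \<longrightarrow> f y \<le> f x0"
      using max by (auto simp: abs_less_iff)
  qed
  with \<open>\<not> D \<le> 0\<close> obtain d where "0 < d" and d: "\<And>h. 0 < h \<Longrightarrow> h < d \<Longrightarrow> 0 < f' (x0 + h)"
    using DERIV_pos_inc_right[OF f''] by force
  define h where "h = min (d / 2) ((b - x0) / 2)"
  have "h \<le> (b - x0) / 2" unfolding h_def by (rule min.cobounded2)
  moreover have "0 < h" "h < d" using \<open>0 < d\<close> x0 by (simp_all add: h_def)
  ultimately have h: "0 < h" "h < d" "x0 + h < b" using x0 by auto
  obtain z where z: "x0 < z" "z < x0 + h" and mvt: "f (x0 + h) - f x0 = h * f' z"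
    using MVT2[of x0 "x0 + h" f f'] f' h x0 by force
  have "0 < f' z" using d[of "z - x0"] z h by simp
  with mvt h have "f x0 < f (x0 + h)" by (simp add: algebra_simps)
  with max[of "x0 + h"] h x0 show False by linarith
qed

text \<open>Perturbing \<open>W\<close> by \<open>- \<delta> t\<close> makes an interior maximum incompatible with \<open>W\<^sub>t = W\<^sub>x\<^sub>x\<close>:
  there the perturbed function would have \<open>W\<^sub>t \<ge> \<delta> > 0 \<ge> W\<^sub>x\<^sub>x\<close>.\<close>
lemma heat_no_perturbed_interior_max:
  fixes W Wx Wxx :: "real \<Rightarrow> real \<Rightarrow> real"
  assumes "0 < \<delta>" and x0: "x0 \<in> {0<..<1}" and t0: "t0 \<in> {0<..T}"
    and dx: "\<And>x. x \<in> {0<..<1} \<Longrightarrow> ((\<lambda>y. W y t0) has_real_derivative Wx x t0) (at x)"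
    and dxx: "((\<lambda>y. Wx y t0) has_real_derivative Wxx x0 t0) (at x0)"
    and dt: "((\<lambda>s. W x0 s) has_real_derivative Wxx x0 t0) (at t0)"
    and max: "\<And>x t. x \<in> {0..1} \<Longrightarrow> t \<in> {0..T} \<Longrightarrow> W x t - \<delta> * t \<le> W x0 t0 - \<delta> * t0"
  shows False
proof -
  have "0 \<le> Wxx x0 t0 - \<delta>"
  proof (rule deriv_nonneg_at_left_max[where f="\<lambda>s. W x0 s - \<delta> * s" and a=0])
    show "((\<lambda>s. W x0 s - \<delta> * s) has_real_derivative Wxx x0 t0 - \<delta>) (at t0)"
      using dt by (intro derivative_eq_intros) auto
    show "0 < t0" using t0 by simp
    show "W x0 s - \<delta> * s \<le> W x0 t0 - \<delta> * t0" if "0 \<le> s" "s \<le> t0" for s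
      using max[of x0 s] that t0 x0 by simp
  qed
  moreover have "Wxx x0 t0 \<le> 0"
  proof (rule second_deriv_nonpos_at_max[where f="\<lambda>y. W y t0" and f'="\<lambda>y. Wx y t0" and a=0 and b=1])
    show "((\<lambda>y. W y t0) has_real_derivative Wx y t0) (at y)" if "0 < y" "y < 1" for y
      using dx that by simp
    show "W y t0 \<le> W x0 t0" if "0 < y" "y < 1" for y
      using max[of y t0] that t0 by simp
  qed (use x0 dxx in simp_all)
  ultimately show False using \<open>0 < \<delta>\<close> by linarith
qed

lemma heat_max_principle:
  fixes W Wx Wxx :: "real \<Rightarrow> real \<Rightarrow> real"
  assumes "0 < T"
    and cont: "continuous_on ({0..1} \<times> {0..T}) (\<lambda>(x, t). W x t)"
    and init: "\<And>x. x \<in> {0..1} \<Longrightarrow> W x 0 \<le> 0"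
    and bdry: "\<And>t. t \<in> {0..T} \<Longrightarrow> W 0 t \<le> 0 \<and> W 1 t \<le> 0"
    and dx: "\<And>x t. x \<in> {0<..<1} \<Longrightarrow> t \<in> {0<..T} \<Longrightarrow> ((\<lambda>y. W y t) has_real_derivative Wx x t) (at x)"
    and dxx: "\<And>x t. x \<in> {0<..<1} \<Longrightarrow> t \<in> {0<..T} \<Longrightarrow> ((\<lambda>y. Wx y t) has_real_derivative Wxx x t) (at x)"
    and dt: "\<And>x t. x \<in> {0<..<1} \<Longrightarrow> t \<in> {0<..T} \<Longrightarrow> ((\<lambda>s. W x s) has_real_derivative Wxx x t) (at t)"
    and x1: "x1 \<in> {0..1}" and t1: "t1 \<in> {0..T}"
  shows "W x1 t1 \<le> 0"
proof (rule ccontr)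
  assume "\<not> W x1 t1 \<le> 0"
  define \<delta> where "\<delta> = W x1 t1 / (2 * (T + 1))"
  have "0 < \<delta>" using \<open>\<not> W x1 t1 \<le> 0\<close> \<open>0 < T\<close> by (simp add: \<delta>_def)
  have "\<delta> * t1 \<le> \<delta> * (T + 1)" using \<open>0 < \<delta>\<close> t1 by (intro mult_left_mono) auto
  also have "\<dots> = W x1 t1 / 2" using \<open>0 < T\<close> by (simp add: \<delta>_def field_simps)
  finally have Z1: "0 < W x1 t1 - \<delta> * t1" using \<open>\<not> W x1 t1 \<le> 0\<close> by linarith
  define Z where "Z p = W (fst p) (snd p) - \<delta> * snd p" for p
  have "continuous_on ({0..1} \<times> {0..T}) Z"
    using cont unfolding Z_def by (intro continuous_intros) (simp add: case_prod_beta)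
  moreover have "compact ({0..1::real} \<times> {0..T})" "{0..1::real} \<times> {0..T} \<noteq> {}"
    using x1 t1 by (auto intro!: compact_Times)
  ultimately obtain p0 where p0: "p0 \<in> {0..1} \<times> {0..T}" and max: "\<forall>p \<in> {0..1} \<times> {0..T}. Z p \<le> Z p0"
    using continuous_attains_sup[of "{0..1} \<times> {0..T}" Z] by blast
  obtain x0 t0 where p0_eq: "p0 = (x0, t0)" by (cases p0)
  have x0: "x0 \<in> {0..1}" and t0: "t0 \<in> {0..T}" using p0 p0_eq by auto
  have max': "W x t - \<delta> * t \<le> W x0 t0 - \<delta> * t0" if "x \<in> {0..1}" "t \<in> {0..T}" for x t
    using max that unfolding p0_eq Z_def by force
  have Z0: "0 < W x0 t0 - \<delta> * t0" using max'[OF x1 t1] Z1 by linarith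
  have "t0 \<noteq> 0" using Z0 init[OF x0] by auto
  with t0 have t0': "t0 \<in> {0<..T}" by auto
  have "0 \<le> \<delta> * t0" using \<open>0 < \<delta>\<close> t0 by simp
  then have "0 < W x0 t0" using Z0 by linarith
  then have "x0 \<noteq> 0" "x0 \<noteq> 1" using bdry[OF t0] by auto
  with x0 have x0': "x0 \<in> {0<..<1}" by auto
  show False
    using \<open>0 < \<delta>\<close> x0' t0' dx[OF _ t0'] dxx[OF x0' t0'] dt[OF x0' t0'] max'
    by (rule heat_no_perturbed_interior_max)
qed

lemma heat_eq_0_if_boundary_0:
  fixes W Wx Wxx :: "real \<Rightarrow> real \<Rightarrow> real"
  assumes cont: "continuous_on ({0..1} \<times> {0..}) (\<lambda>(x, t). W x t)"
    and init: "\<And>x. x \<in> {0..1} \<Longrightarrow> W x 0 = 0"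
    and bdry: "\<And>t. 0 \<le> t \<Longrightarrow> W 0 t = 0 \<and> W 1 t = 0"
    and dx: "\<And>x t. x \<in> {0<..<1} \<Longrightarrow> 0 < t \<Longrightarrow> ((\<lambda>y. W y t) has_real_derivative Wx x t) (at x)"
    and dxx: "\<And>x t. x \<in> {0<..<1} \<Longrightarrow> 0 < t \<Longrightarrow> ((\<lambda>y. Wx y t) has_real_derivative Wxx x t) (at x)"
    and dt: "\<And>x t. x \<in> {0<..<1} \<Longrightarrow> 0 < t \<Longrightarrow> ((\<lambda>s. W x s) has_real_derivative Wxx x t) (at t)"
    and "x \<in> {0..1}" and "0 \<le> t"
  shows "W x t = 0"
proof -
  have "\<sigma> * W x t \<le> 0" for \<sigma> :: real
  proof (rule heat_max_principle[of "t + 1" "\<lambda>x t. \<sigma> * W x t" "\<lambda>x t. \<sigma> * Wx x t" "\<lambda>x t. \<sigma> * Wxx x t"])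
    have "continuous_on ({0..1} \<times> {0..t + 1}) (\<lambda>(x, t). W x t)"
      using cont by (rule continuous_on_subset) auto
    then show "continuous_on ({0..1} \<times> {0..t + 1}) (\<lambda>(x, t). \<sigma> * W x t)"
      by (simp add: case_prod_beta continuous_on_mult_left)
    fix y s :: real assume "y \<in> {0<..<1}" "s \<in> {0<..t + 1}"
    then show "((\<lambda>z. \<sigma> * W z s) has_real_derivative \<sigma> * Wx y s) (at y)"
      and "((\<lambda>z. \<sigma> * Wx z s) has_real_derivative \<sigma> * Wxx y s) (at y)"
      and "((\<lambda>r. \<sigma> * W y r) has_real_derivative \<sigma> * Wxx y s) (at s)"
      by (simp_all add: DERIV_cmult dx dxx dt)
  qed (use init bdry \<open>x \<in> {0..1}\<close> \<open>0 \<le> t\<close> in simp_all)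
  from this[of 1] this[of "-1"] show ?thesis by simp
qed

section \<open>The odd periodic extension of a bump function\<close>

text \<open>The \<open>k\<close>-th derivative of the odd, 2-periodic extension of \<open>f\<close> restricted to \<open>[0, 1]\<close>;
  the sign \<open>(-1) ^ Suc k\<close> comes from differentiating \<open>x \<mapsto> - f (2 - x)\<close> \<open>k\<close> times.\<close>
definition odd_ext_deriv :: "(real \<Rightarrow> real) \<Rightarrow> nat \<Rightarrow> real \<Rightarrow> real" where
  "odd_ext_deriv f k x = (let y = x - 2 * of_int \<lfloor>x / 2\<rfloor> in
      if y \<le> 1 then (deriv ^^ k) f y else (-1) ^ Suc k * (deriv ^^ k) f (2 - y))"

lemma odd_ext_deriv_periodic: "odd_ext_deriv f k (x + 2 * of_int m) = odd_ext_deriv f k x"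
proof -
  have "\<lfloor>(x + 2 * of_int m) / 2\<rfloor> = \<lfloor>x / 2\<rfloor> + m"
    by (simp add: add_divide_distrib)
  then show ?thesis unfolding odd_ext_deriv_def Let_def by (simp add: algebra_simps)
qed

lemma odd_ext_deriv_unit_interval: "x \<in> {0..1} \<Longrightarrow> odd_ext_deriv f k x = (deriv ^^ k) f x"
proof -
  assume x: "x \<in> {0..1}"
  then have "\<lfloor>x / 2\<rfloor> = 0" by (subst floor_eq_iff) auto
  with x show ?thesis unfolding odd_ext_deriv_def Let_def by auto
qed

lemma odd_ext_deriv_attained: "\<exists>z\<in>{0..1}. \<bar>odd_ext_deriv f k x\<bar> = \<bar>(deriv ^^ k) f z\<bar>"
proof -
  define y where "y = x - 2 * of_int \<lfloor>x / 2\<rfloor>"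
  have y: "0 \<le> y" "y < 2"
    using floor_le_iff[of "x / 2"] le_floor_iff[of _ "x / 2"] unfolding y_def by linarith+
  show ?thesis
  proof (cases "y \<le> 1")
    case True
    with y show ?thesis unfolding odd_ext_deriv_def Let_def y_def[symmetric] by auto
  next
    case False
    with y show ?thesis unfolding odd_ext_deriv_def Let_def y_def[symmetric]
      by (intro bexI[of _ "2 - y"]) (auto simp: abs_mult)
  qed
qed

locale smooth_bump =
  fixes f :: "real \<Rightarrow> real" and a b :: real
  assumes support: "0 < a" "a \<le> b" "b < 1" "\<And>x. x \<notin> {a..b} \<Longrightarrow> f x = 0"
    and smooth: "\<And>n x. ((deriv ^^ n) f) differentiable (at x)"
begin

lemma deriv_iterate_has_derivative: "((deriv ^^ k) f has_real_derivative (deriv ^^ Suc k) f x) (at x)"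
  using smooth[of k x] DERIV_deriv_iff_real_differentiable by simp

lemma continuous_on_deriv_iterate: "continuous_on UNIV ((deriv ^^ k) f)"
  using deriv_iterate_has_derivative by (meson DERIV_isCont continuous_at_imp_continuous_on)

lemma deriv_iterate_outside: "x \<notin> {a..b} \<Longrightarrow> (deriv ^^ k) f x = 0"
proof (induction k arbitrary: x)
  case 0
  then show ?case using support by simp
next
  case (Suc k)
  have "((deriv ^^ k) f has_real_derivative 0) (at x)"
    by (rule has_field_derivative_transform_within_open[of "\<lambda>_. 0" _ _ "- {a..b}"])
      (use Suc in auto)
  with deriv_iterate_has_derivative[of k x] show ?case using DERIV_unique by blast
qed

lemma deriv_iterate_unit_boundary: "x \<le> 0 \<or> 1 \<le> x \<Longrightarrow> (deriv ^^ k) f x = 0"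
  using deriv_iterate_outside support by force

text \<open>As \<open>f\<close> vanishes near \<open>0\<close> and \<open>1\<close>, around each period cell the extension is a sum of two
  reflected translates of \<open>f\<close>; this is what makes it smooth.\<close>
lemma odd_ext_deriv_local:
  assumes "2 * of_int j - a < x" "x < 2 * of_int j + 2 + a"
  shows "odd_ext_deriv f k x
    = (deriv ^^ k) f (x - 2 * of_int j) + (-1) ^ Suc k * (deriv ^^ k) f (2 * of_int j + 2 - x)"
proof -
  consider "x < 2 * of_int j" | "2 * of_int j \<le> x \<and> x < 2 * of_int j + 2" | "2 * of_int j + 2 \<le> x"
    by linarith
  then show ?thesis
  proof cases
    case 1
    then have "\<lfloor>x / 2\<rfloor> = j - 1" using assms support by (subst floor_eq_iff) auto
    with 1 assms support show ?thesis
      unfolding odd_ext_deriv_def Let_def by (auto simp: deriv_iterate_unit_boundary deriv_iterate_outside)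
  next
    case 2
    then have "\<lfloor>x / 2\<rfloor> = j" by (subst floor_eq_iff) auto
    with 2 show ?thesis
      unfolding odd_ext_deriv_def Let_def by (auto simp: deriv_iterate_unit_boundary algebra_simps)
  next
    case 3
    then have "\<lfloor>x / 2\<rfloor> = j + 1" using assms support by (subst floor_eq_iff) auto
    with 3 assms support show ?thesis
      unfolding odd_ext_deriv_def Let_def by (auto simp: deriv_iterate_unit_boundary deriv_iterate_outside)
  qed
qed

lemma odd_ext_deriv_has_derivative:
  "(odd_ext_deriv f k has_real_derivative odd_ext_deriv f (Suc k) x) (at x)"
proof -
  define j where "j = \<lfloor>x / 2\<rfloor>"
  define S where "S = {2 * of_int j - a <..< 2 * of_int j + 2 + a}"
  have "2 * of_int j \<le> x" "x < 2 * of_int j + 2"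
    using floor_le_iff[of "x / 2"] le_floor_iff[of _ "x / 2"] unfolding j_def by linarith+
  then have S: "open S" "x \<in> S" using support unfolding S_def by auto
  have "((\<lambda>x. (deriv ^^ k) f (x - 2 * of_int j) + (-1) ^ Suc k * (deriv ^^ k) f (2 * of_int j + 2 - x))
      has_real_derivative (deriv ^^ Suc k) f (x - 2 * of_int j) * 1
        + (-1) ^ Suc k * ((deriv ^^ Suc k) f (2 * of_int j + 2 - x) * - 1)) (at x)"
    by (intro DERIV_add DERIV_cmult DERIV_chain2[OF deriv_iterate_has_derivative])
      (auto intro!: derivative_eq_intros)
  then have "((\<lambda>x. (deriv ^^ k) f (x - 2 * of_int j) + (-1) ^ Suc k * (deriv ^^ k) f (2 * of_int j + 2 - x))
      has_real_derivative (deriv ^^ Suc k) f (x - 2 * of_int j)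
        + (-1) ^ Suc (Suc k) * (deriv ^^ Suc k) f (2 * of_int j + 2 - x)) (at x)"
    by (rule DERIV_cong) simp
  then have "(odd_ext_deriv f k has_real_derivative
      (deriv ^^ Suc k) f (x - 2 * of_int j) + (-1) ^ Suc (Suc k) * (deriv ^^ Suc k) f (2 * of_int j + 2 - x)) (at x)"
    by (rule has_field_derivative_transform_within_open[OF _ S]) (auto simp: S_def odd_ext_deriv_local)
  moreover have "odd_ext_deriv f (Suc k) x = (deriv ^^ Suc k) f (x - 2 * of_int j)
      + (-1) ^ Suc (Suc k) * (deriv ^^ Suc k) f (2 * of_int j + 2 - x)"
    by (rule odd_ext_deriv_local) (use S in \<open>auto simp: S_def\<close>)
  ultimately show ?thesis by (simp only:)
qed

lemma continuous_on_odd_ext_deriv: "continuous_on UNIV (odd_ext_deriv f k)"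
  using odd_ext_deriv_has_derivative by (meson DERIV_isCont continuous_at_imp_continuous_on)

lemma odd_ext_deriv_reflect: "odd_ext_deriv f 0 (2 - x) = - odd_ext_deriv f 0 x"
proof -
  define j where "j = \<lfloor>x / 2\<rfloor>"
  have j: "2 * of_int j \<le> x" "x < 2 * of_int j + 2"
    using floor_le_iff[of "x / 2"] le_floor_iff[of _ "x / 2"] unfolding j_def by linarith+
  have "odd_ext_deriv f 0 x = (deriv ^^ 0) f (x - 2 * of_int j)
      + (-1) ^ Suc 0 * (deriv ^^ 0) f (2 * of_int j + 2 - x)"
    by (rule odd_ext_deriv_local) (use j support(1) in auto)
  moreover have "odd_ext_deriv f 0 (2 - x) = (deriv ^^ 0) f (2 - x - 2 * of_int (- j))
      + (-1) ^ Suc 0 * (deriv ^^ 0) f (2 * of_int (- j) + 2 - (2 - x))"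
    by (rule odd_ext_deriv_local) (use j support(1) in auto)
  ultimately show ?thesis by (simp add: algebra_simps)
qed

end

section \<open>Essential suprema on the unit interval\<close>

lemma space_lebesgue_on_I_int [simp]: "space (lebesgue_on I_int) = I_int"
  unfolding I_int_def by simp

lemma emeasure_lebesgue_on_I_int: "emeasure (lebesgue_on I_int) I_int = 1"
  unfolding I_int_def by (subst emeasure_restrict_space) auto

lemma esssup_I_int_nonneg: "0 \<le> esssup (lebesgue_on I_int) (\<lambda>x. ereal \<bar>u x\<bar>)"
proof -
  have "esssup (lebesgue_on I_int) (\<lambda>x. 0) \<le> esssup (lebesgue_on I_int) (\<lambda>x. ereal \<bar>u x\<bar>)"
    by (rule esssup_mono) auto
  moreover have "esssup (lebesgue_on I_int) (\<lambda>x. 0::ereal) = 0"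
    by (rule esssup_const) (simp add: emeasure_lebesgue_on_I_int)
  ultimately show ?thesis by simp
qed

lemma Linf_I_nonneg: "0 \<le> Linf_I u"
  unfolding Linf_I_def using esssup_I_int_nonneg by (simp add: real_of_ereal_pos)

text \<open>A continuous function exceeding its essential supremum at a point would do so on a
  neighbourhood of positive measure.\<close>
lemma abs_le_Linf_I:
  fixes u :: "real \<Rightarrow> real"
  assumes u: "continuous_on UNIV u" and C: "\<And>x. \<bar>u x\<bar> \<le> C" and y: "y \<in> {0<..<1}"
  shows "\<bar>u y\<bar> \<le> Linf_I u"
proof -
  let ?M = "lebesgue_on I_int"
  let ?e = "esssup ?M (\<lambda>x. ereal \<bar>u x\<bar>)"
  have "(\<lambda>x. ereal \<bar>u x\<bar>) \<in> borel_measurable borel"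
    using borel_measurable_continuous_onI[OF u] by measurable
  then have "(\<lambda>x. ereal \<bar>u x\<bar>) \<in> borel_measurable ?M"
    by (intro measurable_restrict_space1) (simp add: measurable_completion)
  then have "?e \<le> ereal C" by (rule esssup_I) (simp add: C)
  with esssup_I_int_nonneg[of u] obtain r where r: "?e = ereal r" by (cases ?e) auto
  have "\<bar>u y\<bar> \<le> r"
  proof (rule ccontr)
    assume "\<not> \<bar>u y\<bar> \<le> r"
    define A where "A = {x. r < \<bar>u x\<bar>} \<inter> {0<..<1::real}"
    have "open {x. r < \<bar>u x\<bar>}"
      by (rule open_Collect_less) (auto intro!: continuous_intros u)
    then have "open A" unfolding A_def by auto
    moreover have "y \<in> A" using \<open>\<not> \<bar>u y\<bar> \<le> r\<close> y unfolding A_def by auto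
    ultimately obtain d where "0 < d" "ball y d \<subseteq> A" using openE by blast
    have "0 < emeasure lebesgue {y - d<..<y + d}" using \<open>0 < d\<close> by simp
    also have "{y - d<..<y + d} = ball y d" by (auto simp: dist_real_def abs_less_iff)
    also have "emeasure lebesgue (ball y d) \<le> emeasure lebesgue A"
      using \<open>ball y d \<subseteq> A\<close> \<open>open A\<close> by (intro emeasure_mono) auto
    also have "\<dots> = emeasure ?M A"
      by (subst emeasure_restrict_space) (auto simp: A_def I_int_def)
    also have "A = {x \<in> space ?M. ?e < ereal \<bar>u x\<bar>}"
      unfolding A_def r by (auto simp: I_int_def)
    also have "emeasure ?M \<dots> = 0" by (rule esssup_zero_measure)
    finally show False by simp
  qed
  then show ?thesis unfolding Linf_I_def r by simp
qed

lemma abs_le_Linf_I_of_support: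
  fixes u :: "real \<Rightarrow> real"
  assumes u: "continuous_on UNIV u" and support: "\<And>x. x \<notin> {a..b} \<Longrightarrow> u x = 0"
    and "0 < a" "b < 1" and z: "z \<in> {0..1}"
  shows "\<bar>u z\<bar> \<le> Linf_I u"
proof (cases "z \<in> {a..b}")
  case True
  have "compact (u ` {a..b})" by (rule compact_continuous_image[OF continuous_on_subset[OF u]]) auto
  then obtain C where "\<And>y. y \<in> u ` {a..b} \<Longrightarrow> norm y \<le> C"
    using compact_imp_bounded bounded_iff by metis
  then have "\<bar>u x\<bar> \<le> max C 0" for x using support[of x] by (cases "x \<in> {a..b}") force+
  with True \<open>0 < a\<close> \<open>b < 1\<close> show ?thesis by (intro abs_le_Linf_I[OF u]) auto
next
  case False
  then show ?thesis using support Linf_I_nonneg by simp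
qed

section \<open>The heat equation with odd periodic initial data\<close>

text \<open>The \<open>k\<close>-th space derivative of the solution of the heat equation on the line whose initial
  datum is the odd 2-periodic extension of \<open>f\<close>.\<close>
definition heat_ext :: "(real \<Rightarrow> real) \<Rightarrow> nat \<Rightarrow> real \<Rightarrow> real \<Rightarrow> real" where
  "heat_ext f k x t = gauss_avg (odd_ext_deriv f k) x (sqrt (2 * t))"

lemma heat_ext_periodic: "heat_ext f k (x + 2 * of_int m) t = heat_ext f k x t"
proof -
  have "odd_ext_deriv f k (x + 2 * of_int m - s * w) = odd_ext_deriv f k (x - s * w)" for s w
    using odd_ext_deriv_periodic[of f k "x - s * w" m] by (simp add: algebra_simps)
  then show ?thesis unfolding heat_ext_def gauss_avg_def by simp
qed

context smooth_bump
begin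

lemma abs_odd_ext_deriv_le: "\<bar>odd_ext_deriv f k x\<bar> \<le> Linf_I ((deriv ^^ k) f)"
proof -
  obtain z where "z \<in> {0..1}" "\<bar>odd_ext_deriv f k x\<bar> = \<bar>(deriv ^^ k) f z\<bar>"
    using odd_ext_deriv_attained by blast
  with support show ?thesis
    by (metis abs_le_Linf_I_of_support continuous_on_deriv_iterate deriv_iterate_outside)
qed

lemma abs_odd_ext_deriv_le_sqrt: "\<bar>odd_ext_deriv f k x\<bar> \<le> sqrt (Linf_I (\<lambda>x. ((deriv ^^ k) f x)\<^sup>2))"
proof -
  obtain z where z: "z \<in> {0..1}" "\<bar>odd_ext_deriv f k x\<bar> = \<bar>(deriv ^^ k) f z\<bar>"
    using odd_ext_deriv_attained by blast
  have "continuous_on UNIV (\<lambda>x. ((deriv ^^ k) f x)\<^sup>2)"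
    by (intro continuous_intros continuous_on_deriv_iterate)
  then have "\<bar>((deriv ^^ k) f z)\<^sup>2\<bar> \<le> Linf_I (\<lambda>x. ((deriv ^^ k) f x)\<^sup>2)"
    using support z(1) by (intro abs_le_Linf_I_of_support) (auto simp: deriv_iterate_outside)
  with z(2) show ?thesis by (simp add: real_le_rsqrt)
qed

lemma heat_ext_has_derivative_x:
  "((\<lambda>x. heat_ext f k x t) has_real_derivative heat_ext f (Suc k) x t) (at x)"
  unfolding heat_ext_def
  by (rule gauss_avg_has_derivative_x[OF continuous_on_odd_ext_deriv abs_odd_ext_deriv_le
        odd_ext_deriv_has_derivative continuous_on_odd_ext_deriv abs_odd_ext_deriv_le])

lemma heat_ext_has_derivative_t:
  "0 < t \<Longrightarrow> ((\<lambda>t. heat_ext f k x t) has_real_derivative heat_ext f (Suc (Suc k)) x t) (at t)"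
  unfolding heat_ext_def
  by (rule gauss_avg_heat_equation[OF _ continuous_on_odd_ext_deriv abs_odd_ext_deriv_le
        odd_ext_deriv_has_derivative continuous_on_odd_ext_deriv abs_odd_ext_deriv_le
        odd_ext_deriv_has_derivative continuous_on_odd_ext_deriv abs_odd_ext_deriv_le])

lemma continuous_on_heat_ext: "continuous_on (UNIV \<times> {0..}) (\<lambda>(x, t). heat_ext f k x t)"
proof -
  have "continuous_on (UNIV \<times> {0..}) (\<lambda>p::real \<times> real. (fst p, sqrt (2 * snd p)))"
    by (intro continuous_intros)
  then have "continuous_on (UNIV \<times> {0..})
      ((\<lambda>p. gauss_avg (odd_ext_deriv f k) (fst p) (snd p)) \<circ> (\<lambda>p. (fst p, sqrt (2 * snd p))))"
    by (rule continuous_on_compose)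
      (rule continuous_on_subset[OF continuous_on_gauss_avg[OF continuous_on_odd_ext_deriv
            abs_odd_ext_deriv_le]], simp)
  then show ?thesis unfolding heat_ext_def comp_def by (simp add: case_prod_beta)
qed

lemma heat_ext_0: "heat_ext f k x 0 = odd_ext_deriv f k x"
  by (simp add: heat_ext_def)

lemma abs_heat_ext_le: "\<bar>heat_ext f k x t\<bar> \<le> Linf_I ((deriv ^^ k) f)"
  unfolding heat_ext_def by (rule abs_gauss_avg_le[OF continuous_on_odd_ext_deriv abs_odd_ext_deriv_le])

lemma heat_ext_sq_le: "(heat_ext f k x t)\<^sup>2 \<le> Linf_I (\<lambda>x. ((deriv ^^ k) f x)\<^sup>2)"
proof -
  have "\<bar>heat_ext f k x t\<bar> \<le> sqrt (Linf_I (\<lambda>x. ((deriv ^^ k) f x)\<^sup>2))"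
    unfolding heat_ext_def
    by (rule abs_gauss_avg_le[OF continuous_on_odd_ext_deriv abs_odd_ext_deriv_le_sqrt])
  then have "(heat_ext f k x t)\<^sup>2 \<le> (sqrt (Linf_I (\<lambda>x. ((deriv ^^ k) f x)\<^sup>2)))\<^sup>2"
    using abs_le_square_iff by fastforce
  then show ?thesis using Linf_I_nonneg by simp
qed

lemma heat_ext_reflect: "heat_ext f 0 (2 - x) t = - heat_ext f 0 x t"
proof -
  let ?s = "sqrt (2 * t)"
  have "heat_ext f 0 (2 - x) t = (\<integral>w. - (std_normal_density w * odd_ext_deriv f 0 (x + ?s * w)) \<partial>lborel)"
    using odd_ext_deriv_reflect[of "x + ?s * _"] unfolding heat_ext_def gauss_avg_def
    by (simp add: algebra_simps)
  also have "\<dots> = - (\<integral>w. std_normal_density (- w) * odd_ext_deriv f 0 (x - ?s * - w) \<partial>lborel)"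
    by (simp add: std_normal_density_minus)
  also have "(\<integral>w. std_normal_density (- w) * odd_ext_deriv f 0 (x - ?s * - w) \<partial>lborel) = heat_ext f 0 x t"
    using lborel_integral_real_affine[of "-1" "\<lambda>w. std_normal_density w * odd_ext_deriv f 0 (x - ?s * w)" 0]
    unfolding heat_ext_def gauss_avg_def by simp
  finally show ?thesis .
qed

lemma heat_ext_boundary: "heat_ext f 0 0 t = 0" "heat_ext f 0 1 t = 0"
  using heat_ext_reflect[of 1 t] heat_ext_reflect[of 0 t] heat_ext_periodic[of f 0 0 1 t] by simp_all

end

section \<open>The heat solution and its flux\<close>

text \<open>\<open>g_hat = - \<rho>_hat\<^sub>t \<rho>_hat\<^sub>x\<close> with \<open>\<rho>_hat\<^sub>t = \<rho>_hat\<^sub>x\<^sub>x\<close>, and its space derivative.\<close>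
definition g_heat :: "(real \<Rightarrow> real) \<Rightarrow> real \<Rightarrow> real \<Rightarrow> real" where
  "g_heat f x t = - (heat_ext f 2 x t * heat_ext f 1 x t)"

definition g_heat_x :: "(real \<Rightarrow> real) \<Rightarrow> real \<Rightarrow> real \<Rightarrow> real" where
  "g_heat_x f x t = - (heat_ext f 3 x t * heat_ext f 1 x t + (heat_ext f 2 x t)\<^sup>2)"

context smooth_bump
begin

lemma g_heat_has_derivative_x: "((\<lambda>y. g_heat f y t) has_real_derivative g_heat_x f x t) (at x)"
proof -
  have "((\<lambda>y. heat_ext f 2 y t) has_real_derivative heat_ext f 3 x t) (at x)"
    and "((\<lambda>y. heat_ext f 1 y t) has_real_derivative heat_ext f 2 x t) (at x)"
    using heat_ext_has_derivative_x[of 2 t x] heat_ext_has_derivative_x[of 1 t x]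
    by (simp_all add: numeral_3_eq_3 numeral_2_eq_2)
  from DERIV_minus[OF DERIV_mult[OF this]] show ?thesis
    unfolding g_heat_def g_heat_x_def by (simp add: power2_eq_square)
qed

lemma continuous_on_g_heat: "continuous_on (UNIV \<times> {0..}) (\<lambda>(x, t). g_heat f x t)"
  and continuous_on_g_heat_x: "continuous_on (UNIV \<times> {0..}) (\<lambda>(x, t). g_heat_x f x t)"
  using continuous_on_heat_ext[of 1] continuous_on_heat_ext[of 2] continuous_on_heat_ext[of 3]
  unfolding g_heat_def g_heat_x_def case_prod_beta by (auto intro!: continuous_intros)

lemma g_heat_x_ge:
  "- (Linf_I (\<lambda>x. ((deriv ^^ 2) f x)\<^sup>2) + Linf_I (deriv f) * Linf_I ((deriv ^^ 3) f)) \<le> g_heat_x f x t"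
proof -
  have "heat_ext f 3 x t * heat_ext f 1 x t \<le> \<bar>heat_ext f 3 x t\<bar> * \<bar>heat_ext f 1 x t\<bar>"
    by (simp flip: abs_mult)
  also have "\<dots> \<le> Linf_I ((deriv ^^ 3) f) * Linf_I (deriv f)"
    using abs_heat_ext_le[of 3 x t] abs_heat_ext_le[of 1 x t] by (intro mult_mono) auto
  finally show ?thesis
    using heat_ext_sq_le[of 2 x t] unfolding g_heat_x_def by (simp add: mult.commute)
qed

context
  fixes \<rho> :: "real \<Rightarrow> real \<Rightarrow> real"
  assumes heat: "heat_solution \<rho> f"
begin

lemma heat_solution_eq_heat_ext:
  assumes "x \<in> {0..1}" and "0 \<le> t"
  shows "\<rho> x t = heat_ext f 0 x t"
proof -
  let ?\<rho>x = "\<lambda>x t. deriv (\<lambda>z. \<rho> z t) x" and ?\<rho>xx = "\<lambda>x t. deriv (\<lambda>y. deriv (\<lambda>z. \<rho> z t) y) x"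
  have "\<rho> x t - heat_ext f 0 x t = 0"
  proof (rule heat_eq_0_if_boundary_0[where W="\<lambda>x t. \<rho> x t - heat_ext f 0 x t" and Wx="\<lambda>x t. ?\<rho>x x t - heat_ext f 1 x t"
        and Wxx="\<lambda>x t. ?\<rho>xx x t - heat_ext f 2 x t"])
    have "continuous_on ({0..1} \<times> {0..}) (\<lambda>(x, t). \<rho> x t)"
      using heat unfolding heat_solution_def by blast
    moreover have "continuous_on ({0..1} \<times> {0..}) (\<lambda>(x, t). heat_ext f 0 x t)"
      by (rule continuous_on_subset[OF continuous_on_heat_ext]) auto
    ultimately show "continuous_on ({0..1} \<times> {0..}) (\<lambda>(x, t). \<rho> x t - heat_ext f 0 x t)"
      by (auto simp: case_prod_beta intro: continuous_on_diff)
    show "\<rho> y 0 - heat_ext f 0 y 0 = 0" if "y \<in> {0..1}" for y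
      using heat that by (simp add: heat_solution_def heat_ext_0 odd_ext_deriv_unit_interval)
    show "(\<rho> 0 s - heat_ext f 0 0 s = 0) \<and> (\<rho> 1 s - heat_ext f 0 1 s = 0)" if "0 \<le> s" for s
    proof (cases "s = 0")
      case True
      have "f 0 = 0" "f 1 = 0" using support by auto
      with True show ?thesis using heat heat_ext_boundary by (simp add: heat_solution_def)
    next
      case False
      then show ?thesis using heat that heat_ext_boundary by (simp add: heat_solution_def)
    qed
    fix y s :: real assume y: "y \<in> {0<..<1}" and "0 < s"
    have "(\<lambda>z. \<rho> z s) differentiable (at y)" "(\<lambda>y. ?\<rho>x y s) differentiable (at y)"
      and \<rho>t: "((\<lambda>r. \<rho> y r) has_real_derivative ?\<rho>xx y s) (at s)"
      using heat y \<open>0 < s\<close> unfolding heat_solution_def by blast+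
    then have \<rho>x: "((\<lambda>z. \<rho> z s) has_real_derivative ?\<rho>x y s) (at y)"
      and \<rho>xx: "((\<lambda>y. ?\<rho>x y s) has_real_derivative ?\<rho>xx y s) (at y)"
      by (simp_all add: DERIV_deriv_iff_real_differentiable)
    show "((\<lambda>z. \<rho> z s - heat_ext f 0 z s) has_real_derivative ?\<rho>x y s - heat_ext f 1 y s) (at y)"
      using heat_ext_has_derivative_x[of 0 s y] by (intro DERIV_diff \<rho>x) simp
    show "((\<lambda>z. ?\<rho>x z s - heat_ext f 1 z s) has_real_derivative ?\<rho>xx y s - heat_ext f 2 y s) (at y)"
      using heat_ext_has_derivative_x[of 1 s y] by (intro DERIV_diff \<rho>xx) (simp add: numeral_2_eq_2)
    show "((\<lambda>r. \<rho> y r - heat_ext f 0 y r) has_real_derivative ?\<rho>xx y s - heat_ext f 2 y s) (at s)"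
      using heat_ext_has_derivative_t[OF \<open>0 < s\<close>, of 0 y] by (intro DERIV_diff \<rho>t) (simp add: numeral_2_eq_2)
  qed (use assms in auto)
  then show ?thesis by simp
qed

lemma rho_hat_eq_heat_ext:
  assumes "0 \<le> t"
  shows "rho_hat \<rho> x t = heat_ext f 0 x t"
proof -
  define y where "y = x - 2 * of_int \<lfloor>x / 2\<rfloor>"
  have y: "0 \<le> y" "y < 2"
    using floor_le_iff[of "x / 2"] le_floor_iff[of _ "x / 2"] unfolding y_def by linarith+
  have x: "heat_ext f 0 x t = heat_ext f 0 y t"
    using heat_ext_periodic[of f 0 y "\<lfloor>x / 2\<rfloor>" t] unfolding y_def by simp
  show ?thesis
  proof (cases "y \<le> 1")
    case True
    then show ?thesis
      unfolding rho_hat_def Let_def y_def[symmetric] x using heat_solution_eq_heat_ext y assms by simp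
  next
    case False
    then have "rho_hat \<rho> x t = - heat_ext f 0 (2 - y) t"
      unfolding rho_hat_def Let_def y_def[symmetric] using heat_solution_eq_heat_ext y assms by simp
    then show ?thesis unfolding x heat_ext_reflect by simp
  qed
qed

lemma g_hat_eq_g_heat:
  assumes "0 < t"
  shows "g_hat \<rho> x t = g_heat f x t"
proof -
  have "((\<lambda>s. heat_ext f 0 x s) has_real_derivative heat_ext f 2 x t) (at t)"
    using heat_ext_has_derivative_t[OF assms, of 0 x] by (simp add: numeral_2_eq_2)
  then have "((\<lambda>s. rho_hat \<rho> x s) has_real_derivative heat_ext f 2 x t) (at t)"
    by (rule has_field_derivative_transform_within_open[of _ _ _ "{0<..}"])
      (use assms rho_hat_eq_heat_ext in auto)
  moreover have "((\<lambda>y. rho_hat \<rho> y t) has_real_derivative heat_ext f 1 x t) (at x)"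
    using heat_ext_has_derivative_x[of 0 t x] assms by (simp add: rho_hat_eq_heat_ext)
  ultimately show ?thesis
    unfolding g_hat_def g_heat_def by (simp add: DERIV_imp_deriv)
qed

lemma deriv_g_hat_eq_g_heat_x: "0 < t \<Longrightarrow> deriv (\<lambda>y. g_hat \<rho> y t) x = g_heat_x f x t"
  using g_heat_has_derivative_x by (simp add: g_hat_eq_g_heat DERIV_imp_deriv)

end

end

section \<open>Integrals of compactly supported functions over \<open>Q_T\<close>\<close>

lemma Q_T_borel: "Q_T T \<in> sets borel"
  unfolding Q_T_def by (intro borel_open open_Times) auto

lemma Q_T_subset: "Q_T T \<subseteq> UNIV \<times> {0..<T}"
  unfolding Q_T_def by auto

lemma indicator_Q_T: "(\<lambda>p. indicator (Q_T T) p * (\<lambda>(x, t). D x t) p) = (\<lambda>(x, t). indicator {0<..<T} t * D x t)"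
  by (auto simp: fun_eq_iff Q_T_def indicator_def)

lemma space_lebesgue_on_Q_T [simp]: "space (lebesgue_on (Q_T T)) = Q_T T"
  using Q_T_borel by simp

lemma integrable_indicator_compact_support:
  fixes f :: "'a::euclidean_space \<Rightarrow> real"
  assumes "continuous_on S f" "compact K" "K \<subseteq> S" "\<And>x. x \<in> S \<Longrightarrow> x \<notin> K \<Longrightarrow> f x = 0"
    and "A \<in> sets borel" "A \<subseteq> S"
  shows "integrable lborel (\<lambda>x. indicator A x * f x)"
proof -
  have "integrable lborel (\<lambda>x. indicator K x *\<^sub>R f x)"
    by (rule borel_integrable_compact[OF \<open>compact K\<close> continuous_on_subset[OF assms(1,3)]])
  moreover have "A \<in> sets lborel" using \<open>A \<in> sets borel\<close> by simp
  ultimately have "integrable lborel (\<lambda>x. indicator A x *\<^sub>R (indicator K x *\<^sub>R f x))"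
    by (rule integrable_mult_indicator[rotated])
  moreover have "(\<lambda>x. indicator A x *\<^sub>R (indicator K x *\<^sub>R f x)) = (\<lambda>x. indicator A x * f x)"
    using assms(4,6) by (auto simp: fun_eq_iff indicator_def)
  ultimately show ?thesis by simp
qed

lemma tendsto_0_if_compact_support:
  fixes F :: "real \<Rightarrow> real"
  assumes "compact C" and "\<And>x. x \<notin> C \<Longrightarrow> F x = 0"
  shows "(F \<longlongrightarrow> 0) at_top" "(F \<longlongrightarrow> 0) at_bot"
proof -
  obtain R where R: "\<And>x. x \<in> C \<Longrightarrow> \<bar>x\<bar> \<le> R"
    using compact_imp_bounded[OF \<open>compact C\<close>] bounded_iff by (metis real_norm_def)
  have "\<forall>\<^sub>F x in at_top. F x = 0"
    unfolding eventually_at_top_linorder by (rule exI[of _ "R + 1"]) (use R assms(2) in force)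
  moreover have "\<forall>\<^sub>F x in at_bot. F x = 0"
    unfolding eventually_at_bot_linorder by (rule exI[of _ "- R - 1"]) (use R assms(2) in force)
  ultimately show "(F \<longlongrightarrow> 0) at_top" "(F \<longlongrightarrow> 0) at_bot" by (simp_all add: tendsto_eventually)
qed

lemma compact_below_time:
  fixes K :: "('a::topological_space \<times> real) set"
  assumes "compact K" "K \<subseteq> UNIV \<times> {0..<T}" "0 < T"
  obtains T' where "0 < T'" "T' < T" "\<And>p. p \<in> K \<Longrightarrow> snd p < T'"
proof (cases "K = {}")
  case True
  with \<open>0 < T\<close> show ?thesis using that[of "T / 2"] by simp
next
  case False
  have "compact (snd ` K)" using assms by (intro compact_continuous_image continuous_intros)
  then obtain m where "m \<in> snd ` K" "\<And>s. s \<in> snd ` K \<Longrightarrow> s \<le> m"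
    using compact_attains_sup False by (metis image_is_empty)
  moreover from this have "0 \<le> m" "m < T" using assms by auto
  ultimately show ?thesis using that[of "(m + T) / 2"] by fastforce
qed

context
  fixes T :: real and K :: "(real \<times> real) set" and D :: "real \<Rightarrow> real \<Rightarrow> real"
  assumes K: "compact K" "K \<subseteq> UNIV \<times> {0..<T}"
    and D_cont: "continuous_on (UNIV \<times> {0..<T}) (\<lambda>(x, t). D x t)"
    and D_support: "\<And>x t. t \<in> {0..<T} \<Longrightarrow> (x, t) \<notin> K \<Longrightarrow> D x t = 0"
begin

lemma integrable_pair_Q_T: "integrable (lborel \<Otimes>\<^sub>M lborel) (\<lambda>(x, t). indicator {0<..<T} t * D x t)"
proof -
  have "integrable lborel (\<lambda>p. indicator (Q_T T) p * (\<lambda>(x, t). D x t) p)"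
    by (rule integrable_indicator_compact_support[OF D_cont K])
      (auto simp: D_support Q_T_borel Q_T_subset)
  then show ?thesis unfolding lborel_prod indicator_Q_T .
qed

lemma measurable_pair_Q_T: "(\<lambda>(x, t). indicator {0<..<T} t * D x t) \<in> borel_measurable lborel"
  using integrable_pair_Q_T unfolding lborel_prod by (rule borel_measurable_integrable)

lemma integrable_Q_T: "integrable (lebesgue_on (Q_T T)) (\<lambda>(x, t). D x t)"
proof -
  have "integrable lebesgue (\<lambda>(x, t). indicator {0<..<T} t * D x t)"
    using integrable_pair_Q_T unfolding lborel_prod
    by (subst integrable_completion[OF measurable_pair_Q_T])
  then show ?thesis
    using Q_T_borel by (subst integrable_restrict_space) (simp_all add: indicator_Q_T)
qed

lemma integral_Q_T_eq_pair:
  "integral\<^sup>L (lebesgue_on (Q_T T)) (\<lambda>(x, t). D x t)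
    = integral\<^sup>L (lborel \<Otimes>\<^sub>M lborel) (\<lambda>(x, t). indicator {0<..<T} t * D x t)"
proof -
  have "integral\<^sup>L (lebesgue_on (Q_T T)) (\<lambda>(x, t). D x t)
      = integral\<^sup>L lebesgue (\<lambda>(x, t). indicator {0<..<T} t * D x t)"
    using Q_T_borel by (subst integral_restrict_space) (simp_all add: indicator_Q_T)
  also have "\<dots> = integral\<^sup>L lborel (\<lambda>(x, t). indicator {0<..<T} t * D x t)"
    by (rule integral_completion[OF measurable_pair_Q_T])
  finally show ?thesis unfolding lborel_prod .
qed

lemma integral_Q_T_space_derivative:
  assumes P_deriv: "\<And>x t. 0 < t \<Longrightarrow> t < T \<Longrightarrow> ((\<lambda>y. P y t) has_real_derivative D x t) (at x)"
    and P_support: "\<And>x t. t \<in> {0..<T} \<Longrightarrow> (x, t) \<notin> K \<Longrightarrow> P x t = 0"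
  shows "integral\<^sup>L (lebesgue_on (Q_T T)) (\<lambda>(x, t). D x t) = 0"
proof -
  have inner: "(\<integral>x. indicator {0<..<T} t * D x t \<partial>lborel) = 0" for t
  proof (cases "t \<in> {0<..<T}")
    case True
    have "continuous_on UNIV (\<lambda>x. (\<lambda>(x, t). D x t) (x, t))"
      using True by (intro continuous_on_compose2[OF D_cont]) (auto intro!: continuous_intros)
    then have D_cont_t: "continuous_on UNIV (\<lambda>x. D x t)" by simp
    have "compact (fst ` K)" using K by (intro compact_continuous_image continuous_intros)
    have outside: "(y, t) \<notin> K" if "y \<notin> fst ` K" for y using that by force
    have "integrable lborel (\<lambda>x. indicator UNIV x * D x t)"
      by (rule integrable_indicator_compact_support[OF D_cont_t \<open>compact (fst ` K)\<close>])
        (use outside D_support True in auto)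
    then have D_int: "integrable lborel (\<lambda>x. D x t)" by simp
    have "P y t = 0" if "y \<notin> fst ` K" for y using P_support[of t y] outside[OF that] True by simp
    note P_lim = tendsto_0_if_compact_support[OF \<open>compact (fst ` K)\<close> this]
    have "((\<lambda>y. P y t) has_real_derivative D y t) (at y)" for y using P_deriv True by simp
    from integral_eq_0_if_antiderivative_vanishes_at_infinity[OF this D_cont_t D_int P_lim]
    have "(\<integral>x. D x t \<partial>lborel) = 0" .
    then show ?thesis using True by simp
  qed simp
  show ?thesis
    unfolding integral_Q_T_eq_pair lborel_pair.integral_snd[OF integrable_pair_Q_T, symmetric] inner
    by simp
qed

lemma continuous_on_time_line: "continuous_on {0..<T} (\<lambda>t. D x t)"
proof -
  have "continuous_on {0..<T} (\<lambda>t. (\<lambda>(x, t). D x t) (x, t))"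
    by (intro continuous_on_compose2[OF D_cont]) (auto intro!: continuous_intros)
  then show ?thesis by simp
qed

lemma integral_time_line_truncate:
  assumes T': "0 < T'" "T' < T" and K_below: "\<And>p. p \<in> K \<Longrightarrow> snd p < T'"
  shows "(\<integral>t. indicator {0<..<T} t * D x t \<partial>lborel) = (\<integral>t. indicator {0..T'} t *\<^sub>R D x t \<partial>lborel)"
proof (rule integral_cong_AE)
  have "(\<lambda>t. indicator {0<..<T} t *\<^sub>R D x t) \<in> borel_measurable borel"
    by (intro borel_measurable_continuous_on_indicator continuous_on_subset[OF continuous_on_time_line]) auto
  then show "(\<lambda>t. indicator {0<..<T} t * D x t) \<in> borel_measurable lborel" by simp
  have "(\<lambda>t. indicator {0..T'} t *\<^sub>R D x t) \<in> borel_measurable borel"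
    using T' by (intro borel_measurable_continuous_on_indicator continuous_on_subset[OF continuous_on_time_line]) auto
  then show "(\<lambda>t. indicator {0..T'} t *\<^sub>R D x t) \<in> borel_measurable lborel" by simp
  show "AE t in lborel. indicator {0<..<T} t * D x t = indicator {0..T'} t *\<^sub>R D x t"
    using AE_lborel_singleton[of 0]
  proof eventually_elim
    case (elim t)
    show ?case
    proof (cases "T' < t \<and> t < T")
      case True
      then have "(x, t) \<notin> K" using K_below by force
      then show ?thesis using D_support True T' by (auto simp: indicator_def)
    next
      case False
      with elim T' show ?thesis by (cases "0 < t") (auto simp: indicator_def)
    qed
  qed
qed

lemma integral_Q_T_time_derivative:
  assumes P_deriv: "\<And>x t. t \<in> {0..<T} \<Longrightarrow> ((\<lambda>s. P x s) has_real_derivative D x t) (at t within {0..<T})"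
    and P_support: "\<And>x t. t \<in> {0..<T} \<Longrightarrow> (x, t) \<notin> K \<Longrightarrow> P x t = 0"
    and "0 < T"
  shows "integral\<^sup>L (lebesgue_on (Q_T T)) (\<lambda>(x, t). D x t) = - (\<integral>x. P x 0 \<partial>lborel)"
proof -
  obtain T' where T': "0 < T'" "T' < T" and K_below: "\<And>p. p \<in> K \<Longrightarrow> snd p < T'"
    using compact_below_time[OF K \<open>0 < T\<close>] by blast
  have inner: "(\<integral>t. indicator {0<..<T} t * D x t \<partial>lborel) = - P x 0" for x
  proof -
    have "(\<integral>t. indicator {0<..<T} t * D x t \<partial>lborel) = (\<integral>t. indicator {0..T'} t *\<^sub>R D x t \<partial>lborel)"
      by (rule integral_time_line_truncate[OF T' K_below])
    also have "\<dots> = P x T' - P x 0"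
    proof (rule integral_FTC_Icc)
      fix s assume "0 \<le> s" "s \<le> T'"
      then have "((\<lambda>s. P x s) has_real_derivative D x s) (at s within {0..T'})"
        using T' by (intro DERIV_subset[OF P_deriv]) auto
      then show "((\<lambda>s. P x s) has_vector_derivative D x s) (at s within {0..T'})"
        by (simp add: has_real_derivative_iff_has_vector_derivative)
    qed (use T' in \<open>auto intro: continuous_on_subset[OF continuous_on_time_line]\<close>)
    also have "P x T' = 0"
      using P_support[of T' x] K_below[of "(x, T')"] T' by auto
    finally show ?thesis by simp
  qed
  show ?thesis
    unfolding integral_Q_T_eq_pair lborel_pair.integral_fst[OF integrable_pair_Q_T, symmetric] inner
    by simp
qed

end

section \<open>Entropy super-solutions that are constant in space\<close>

lemma test_funD:
  assumes "test_fun T \<phi> \<phi>x \<phi>t"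
  shows "\<And>x t. t \<in> {0..<T} \<Longrightarrow> 0 \<le> \<phi> x t"
    and "\<And>x t. t \<in> {0..<T} \<Longrightarrow> ((\<lambda>y. \<phi> y t) has_real_derivative \<phi>x x t) (at x)"
    and "\<And>x t. t \<in> {0..<T} \<Longrightarrow> ((\<lambda>s. \<phi> x s) has_real_derivative \<phi>t x t) (at t within {0..<T})"
    and "continuous_on (UNIV \<times> {0..<T}) (\<lambda>p. \<phi> (fst p) (snd p))"
    and "continuous_on (UNIV \<times> {0..<T}) (\<lambda>p. \<phi>x (fst p) (snd p))"
    and "continuous_on (UNIV \<times> {0..<T}) (\<lambda>p. \<phi>t (fst p) (snd p))"
  using assms unfolding test_fun_def case_prod_beta by blast+

lemma test_fun_support:
  assumes "test_fun T \<phi> \<phi>x \<phi>t"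
  obtains K where "compact K" "K \<subseteq> UNIV \<times> {0..<T}"
    "\<And>x t. t \<in> {0..<T} \<Longrightarrow> (x, t) \<notin> K \<Longrightarrow> \<phi> x t = 0 \<and> \<phi>x x t = 0 \<and> \<phi>t x t = 0"
proof -
  have K_ex: "\<exists>K. compact K \<and> K \<subseteq> UNIV \<times> {0..<T} \<and> (\<forall>x. \<forall>t\<in>{0..<T}. (x, t) \<notin> K \<longrightarrow> \<phi> x t = 0)"
    and \<phi>x: "\<And>x t. t \<in> {0..<T} \<Longrightarrow> ((\<lambda>y. \<phi> y t) has_real_derivative \<phi>x x t) (at x)"
    and \<phi>t: "\<And>x t. t \<in> {0..<T} \<Longrightarrow> ((\<lambda>s. \<phi> x s) has_real_derivative \<phi>t x t) (at t within {0..<T})"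
    using assms unfolding test_fun_def by blast+
  from K_ex obtain K where K: "compact K" "K \<subseteq> UNIV \<times> {0..<T}"
    and \<phi>_support: "\<And>x t. t \<in> {0..<T} \<Longrightarrow> (x, t) \<notin> K \<Longrightarrow> \<phi> x t = 0"
    by blast
  have derivs_vanish: "\<phi>x x t = 0 \<and> \<phi>t x t = 0" if t: "t \<in> {0..<T}" and "(x, t) \<notin> K" for x t
  proof -
    have "open (- K)" using K(1) compact_imp_closed by auto
    then obtain e where "0 < e" and e: "ball (x, t) e \<subseteq> - K"
      using \<open>(x, t) \<notin> K\<close> openE by (metis ComplI)
    have near: "\<phi> y s = 0" if "s \<in> {0..<T}" "dist (y, s) (x, t) < e" for y s
      using \<phi>_support[OF that(1)] e that(2) by (auto simp: dist_commute subset_iff)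
    have "((\<lambda>y. 0) has_real_derivative 0) (at x)" by simp
    then have "((\<lambda>y. \<phi> y t) has_real_derivative 0) (at x)"
    proof (rule has_field_derivative_transform_within_open[of _ _ _ "ball x e"])
      show "open (ball x e)" "x \<in> ball x e" using \<open>0 < e\<close> by auto
      fix y assume "y \<in> ball x e"
      then have "dist (y, t) (x, t) < e" by (simp add: dist_Pair_Pair dist_commute)
      then show "0 = \<phi> y t" using near[OF t] by auto
    qed
    then have "\<phi>x x t = 0" using DERIV_unique \<phi>x[OF t] by blast
    have "((\<lambda>s. 0) has_real_derivative 0) (at t within {0..<T})" by simp
    then have "((\<lambda>s. \<phi> x s) has_real_derivative 0) (at t within {0..<T})"
    proof (rule has_field_derivative_transform_within[OF _ \<open>0 < e\<close> t])
      fix s assume "s \<in> {0..<T}" "dist s t < e"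
      then have "dist (x, s) (x, t) < e" by (simp add: dist_Pair_Pair)
      then show "0 = \<phi> x s" using near[OF \<open>s \<in> {0..<T}\<close>] by auto
    qed
    moreover have "at t within {0..<T} \<noteq> bot" using t by (simp add: trivial_limit_within)
    ultimately have "\<phi>t x t = 0" using has_field_derivative_unique \<phi>t[OF t] by blast
    with \<open>\<phi>x x t = 0\<close> show ?thesis ..
  qed
  show thesis
  proof (rule that[OF K])
    fix x t assume "t \<in> {0..<T}" "(x, t) \<notin> K"
    then show "\<phi> x t = 0 \<and> \<phi>x x t = 0 \<and> \<phi>t x t = 0" using \<phi>_support derivs_vanish by blast
  qed
qed
lemma antimono_deriv_nonpos:
  fixes \<eta> :: "real \<Rightarrow> real"
  assumes "antimono \<eta>" and "(\<eta> has_real_derivative D) (at u)"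
  shows "D \<le> 0"
proof (rule ccontr)
  assume "\<not> D \<le> 0"
  then obtain d where "0 < d" and "\<And>h. 0 < h \<Longrightarrow> h < d \<Longrightarrow> \<eta> u < \<eta> (u + h)"
    using DERIV_pos_inc_right[OF assms(2)] by force
  then have "\<eta> u < \<eta> (u + d / 2)" by simp
  moreover have "\<eta> (u + d / 2) \<le> \<eta> u" using assms(1) \<open>0 < d\<close> by (simp add: antimonoD)
  ultimately show False by simp
qed

text \<open>For \<open>S(t) = sqrt (2 c\<^sub>1 t + c\<^sub>2)\<close> we have \<open>S' = c\<^sub>1 / S\<close>, so the entropy integrand splits into
  the exact derivatives \<open>(\<eta>(S) \<phi>)\<^sub>t\<close> and \<open>(\<Phi>(S) G \<phi>)\<^sub>x\<close> plus a remainder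
  \<open>- \<eta>'(S) \<phi> (c\<^sub>1 + G\<^sub>x) / S\<close>, which is nonnegative once \<open>G\<^sub>x \<ge> - c\<^sub>1\<close>.\<close>
locale homogeneous_entropy_data =
  fixes T c1 c2 :: real and G Gx \<phi> \<phi>x \<phi>t :: "real \<Rightarrow> real \<Rightarrow> real" and K :: "(real \<times> real) set"
    and \<eta> \<eta>' \<Phi> :: "real \<Rightarrow> real"
  assumes T: "0 < T" and c1: "0 \<le> c1" and c2: "1 \<le> c2"
    and G_cont: "continuous_on (UNIV \<times> {0..}) (\<lambda>(x, t). G x t)"
    and Gx_cont: "continuous_on (UNIV \<times> {0..}) (\<lambda>(x, t). Gx x t)"
    and G_deriv: "\<And>x t. 0 < t \<Longrightarrow> ((\<lambda>y. G y t) has_real_derivative Gx x t) (at x)"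
    and Gx_ge: "\<And>x t. 0 < t \<Longrightarrow> - c1 \<le> Gx x t"
    and \<phi>: "test_fun T \<phi> \<phi>x \<phi>t"
    and K: "compact K" "K \<subseteq> UNIV \<times> {0..<T}"
    and K_support: "\<And>x t. t \<in> {0..<T} \<Longrightarrow> (x, t) \<notin> K \<Longrightarrow> \<phi> x t = 0 \<and> \<phi>x x t = 0 \<and> \<phi>t x t = 0"
    and \<eta>_deriv: "\<And>u. (\<eta> has_real_derivative \<eta>' u) (at u)" and \<eta>'_cont: "continuous_on UNIV \<eta>'"
    and \<eta>_antimono: "antimono \<eta>" and \<Phi>_cont: "continuous_on UNIV \<Phi>"
begin

definition S :: "real \<Rightarrow> real" where
  "S t = sqrt (2 * c1 * t + c2)"

definition integrand :: "real \<Rightarrow> real \<Rightarrow> real" where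
  "integrand x t = \<eta> (S t) * \<phi>t x t + \<Phi> (S t) * G x t * \<phi>x x t
    + (\<Phi> (S t) - \<eta>' (S t) / S t) * Gx x t * \<phi> x t"

definition time_part :: "real \<Rightarrow> real \<Rightarrow> real" where
  "time_part x t = \<eta>' (S t) * (c1 / S t) * \<phi> x t + \<eta> (S t) * \<phi>t x t"

definition space_part :: "real \<Rightarrow> real \<Rightarrow> real" where
  "space_part x t = \<Phi> (S t) * (Gx x t * \<phi> x t + G x t * \<phi>x x t)"

definition remainder :: "real \<Rightarrow> real \<Rightarrow> real" where
  "remainder x t = - \<eta>' (S t) * \<phi> x t * (c1 + Gx x t) / S t"

lemma S_ge_1: "0 \<le> t \<Longrightarrow> 1 \<le> S t"
proof -
  assume "0 \<le> t"
  then have "0 \<le> 2 * c1 * t" using c1 by simp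
  then show ?thesis unfolding S_def using c2 by simp
qed

lemma S_has_derivative: "0 \<le> t \<Longrightarrow> (S has_real_derivative c1 / S t) (at t)"
proof -
  assume "0 \<le> t"
  then have "0 < 2 * c1 * t + c2" using c1 c2 by (smt (verit) mult_nonneg_nonneg)
  then show ?thesis unfolding S_def by (auto intro!: derivative_eq_intros simp: field_simps)
qed

lemma integrand_decomposition:
  "0 \<le> t \<Longrightarrow> integrand x t = time_part x t + space_part x t + remainder x t"
  using S_ge_1[of t] unfolding integrand_def time_part_def space_part_def remainder_def
  by (simp add: field_simps)

lemma remainder_nonneg:
  assumes "0 < t" "t < T"
  shows "0 \<le> remainder x t"
proof -
  have "\<eta>' (S t) \<le> 0" by (rule antimono_deriv_nonpos[OF \<eta>_antimono \<eta>_deriv])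
  moreover have "0 \<le> \<phi> x t" using \<phi> assms unfolding test_fun_def by simp
  moreover have "0 \<le> c1 + Gx x t" using Gx_ge[OF \<open>0 < t\<close>, of x] by simp
  moreover have "0 < S t" using S_ge_1[of t] assms by simp
  ultimately have "0 \<le> - \<eta>' (S t) * \<phi> x t * (c1 + Gx x t)" "0 < S t"
    by (simp_all add: mult_nonneg_nonneg mult_nonpos_nonneg)
  then show ?thesis unfolding remainder_def by (rule divide_nonneg_pos)
qed

lemma continuous_on_S: "continuous_on UNIV S"
  unfolding S_def by (intro continuous_intros)

lemma continuous_on_comp_S:
  fixes h :: "real \<Rightarrow> real"
  assumes "continuous_on UNIV h"
  shows "continuous_on (UNIV \<times> {0..<T}) (\<lambda>p. h (S (snd p)))"
proof -
  have "continuous_on UNIV (\<lambda>t. h (S t))"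
    by (rule continuous_on_compose2[OF assms continuous_on_S]) simp
  then show ?thesis
    by (rule continuous_on_compose2) (auto intro!: continuous_intros)
qed

lemma continuous_on_G_Gx:
  shows "continuous_on (UNIV \<times> {0..<T}) (\<lambda>p. G (fst p) (snd p))"
    and "continuous_on (UNIV \<times> {0..<T}) (\<lambda>p. Gx (fst p) (snd p))"
proof -
  have "continuous_on (UNIV \<times> {0..<T}) (\<lambda>(x, t). G x t)"
    and "continuous_on (UNIV \<times> {0..<T}) (\<lambda>(x, t). Gx x t)"
    by (rule continuous_on_subset[OF G_cont] continuous_on_subset[OF Gx_cont]; auto)+
  then show "continuous_on (UNIV \<times> {0..<T}) (\<lambda>p. G (fst p) (snd p))"
    and "continuous_on (UNIV \<times> {0..<T}) (\<lambda>p. Gx (fst p) (snd p))"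
    by (simp_all add: case_prod_beta)
qed

lemma continuous_on_\<eta>: "continuous_on UNIV \<eta>"
  using \<eta>_deriv by (meson DERIV_isCont continuous_at_imp_continuous_on)

lemma continuous_on_S_snd: "continuous_on (UNIV \<times> {0..<T}) (\<lambda>p. S (snd p))"
  by (rule continuous_on_compose2[OF continuous_on_S]) (auto intro!: continuous_intros)

lemma S_nonzero: "\<forall>p \<in> UNIV \<times> {0..<T}. S (snd p) \<noteq> 0"
  using S_ge_1 by force

lemmas continuous_on_components =
  continuous_on_comp_S[OF continuous_on_\<eta>] continuous_on_comp_S[OF \<eta>'_cont]
  continuous_on_comp_S[OF \<Phi>_cont] continuous_on_S_snd
  continuous_on_G_Gx test_funD(4-6)[OF \<phi>]

lemma continuous_on_integrand: "continuous_on (UNIV \<times> {0..<T}) (\<lambda>(x, t). integrand x t)"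
  unfolding integrand_def case_prod_beta by (intro continuous_intros continuous_on_components S_nonzero)

lemma continuous_on_time_part: "continuous_on (UNIV \<times> {0..<T}) (\<lambda>(x, t). time_part x t)"
  unfolding time_part_def case_prod_beta by (intro continuous_intros continuous_on_components S_nonzero)

lemma continuous_on_space_part: "continuous_on (UNIV \<times> {0..<T}) (\<lambda>(x, t). space_part x t)"
  unfolding space_part_def case_prod_beta by (intro continuous_intros continuous_on_components S_nonzero)

lemma continuous_on_remainder: "continuous_on (UNIV \<times> {0..<T}) (\<lambda>(x, t). remainder x t)"
  unfolding remainder_def case_prod_beta by (intro continuous_intros continuous_on_components S_nonzero)

lemma integrand_parts_outside:
  assumes "t \<in> {0..<T}" "(x, t) \<notin> K"
  shows "integrand x t = 0" "time_part x t = 0" "space_part x t = 0" "remainder x t = 0"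
  using K_support[OF assms] unfolding integrand_def time_part_def space_part_def remainder_def by simp_all

lemma integral_time_part:
  "integral\<^sup>L (lebesgue_on (Q_T T)) (\<lambda>(x, t). time_part x t) = - (\<integral>x. \<eta> (S 0) * \<phi> x 0 \<partial>lborel)"
proof (rule integral_Q_T_time_derivative[OF K continuous_on_time_part integrand_parts_outside(2)
      _ _ T, where P="\<lambda>x t. \<eta> (S t) * \<phi> x t"])
  fix x t assume t: "t \<in> {0..<T}"
  have "((\<lambda>s. \<eta> (S s)) has_real_derivative \<eta>' (S t) * (c1 / S t)) (at t within {0..<T})"
    using t by (intro has_field_derivative_at_within[OF DERIV_chain2[OF \<eta>_deriv S_has_derivative]]) simp
  from DERIV_mult[OF this test_funD(3)[OF \<phi> t]]
  show "((\<lambda>s. \<eta> (S s) * \<phi> x s) has_real_derivative time_part x t) (at t within {0..<T})"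
    by (rule DERIV_cong) (simp add: time_part_def algebra_simps)
next
  fix x t assume "t \<in> {0..<T}" "(x, t) \<notin> K"
  then show "\<eta> (S t) * \<phi> x t = 0" using K_support by simp
qed

lemma integral_space_part: "integral\<^sup>L (lebesgue_on (Q_T T)) (\<lambda>(x, t). space_part x t) = 0"
proof (rule integral_Q_T_space_derivative[OF K continuous_on_space_part integrand_parts_outside(3),
      where P="\<lambda>x t. \<Phi> (S t) * (G x t * \<phi> x t)"])
  fix x t :: real assume "0 < t" "t < T"
  then have "t \<in> {0..<T}" by simp
  from DERIV_cmult[OF DERIV_mult[OF G_deriv[OF \<open>0 < t\<close>] test_funD(2)[OF \<phi> this]], of "\<Phi> (S t)"]
  show "((\<lambda>y. \<Phi> (S t) * (G y t * \<phi> y t)) has_real_derivative space_part x t) (at x)"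
    by (rule DERIV_cong) (simp add: space_part_def algebra_simps)
next
  fix x t assume "t \<in> {0..<T}" "(x, t) \<notin> K"
  then show "\<Phi> (S t) * (G x t * \<phi> x t) = 0" using K_support by simp
qed

lemma integrable_initial_term: "integrable lborel (\<lambda>x. \<eta> (S 0) * \<phi> x 0)"
proof -
  have "continuous_on UNIV (\<lambda>x. (\<lambda>p. \<phi> (fst p) (snd p)) (x, 0::real))"
    by (rule continuous_on_compose2[OF test_funD(4)[OF \<phi>]]) (use T in \<open>auto intro!: continuous_intros\<close>)
  then have "continuous_on UNIV (\<lambda>x. \<eta> (S 0) * \<phi> x 0)" by (simp add: continuous_on_mult_left)
  moreover have "compact (fst ` K)" using K by (intro compact_continuous_image continuous_intros)
  moreover have "\<eta> (S 0) * \<phi> x 0 = 0" if "x \<notin> fst ` K" for x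
  proof -
    have "(x, 0) \<notin> K" using that by force
    then show ?thesis using K_support[of 0 x] T by simp
  qed
  ultimately have "integrable lborel (\<lambda>x. indicator UNIV x * (\<eta> (S 0) * \<phi> x 0))"
    by (intro integrable_indicator_compact_support) auto
  then show ?thesis by simp
qed

lemma entropy_inequality:
  shows "integrable (lebesgue_on (Q_T T)) (\<lambda>(x, t). integrand x t)"
    and "0 \<le> integral\<^sup>L (lebesgue_on (Q_T T)) (\<lambda>(x, t). integrand x t) + (\<integral>x. \<eta> (S 0) * \<phi> x 0 \<partial>lborel)"
proof -
  show "integrable (lebesgue_on (Q_T T)) (\<lambda>(x, t). integrand x t)"
    by (rule integrable_Q_T[OF K continuous_on_integrand integrand_parts_outside(1)])
  have "integral\<^sup>L (lebesgue_on (Q_T T)) (\<lambda>(x, t). integrand x t)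
      = integral\<^sup>L (lebesgue_on (Q_T T)) (\<lambda>p. (\<lambda>(x, t). time_part x t) p
          + (\<lambda>(x, t). space_part x t) p + (\<lambda>(x, t). remainder x t) p)"
    by (rule Bochner_Integration.integral_cong) (auto simp: Q_T_def integrand_decomposition)
  also have "\<dots> = integral\<^sup>L (lebesgue_on (Q_T T)) (\<lambda>(x, t). time_part x t)
      + integral\<^sup>L (lebesgue_on (Q_T T)) (\<lambda>(x, t). space_part x t)
      + integral\<^sup>L (lebesgue_on (Q_T T)) (\<lambda>(x, t). remainder x t)"
    using integrable_Q_T[OF K continuous_on_time_part integrand_parts_outside(2)]
      integrable_Q_T[OF K continuous_on_space_part integrand_parts_outside(3)]
      integrable_Q_T[OF K continuous_on_remainder integrand_parts_outside(4)]
    by simp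
  also have "\<dots> = - (\<integral>x. \<eta> (S 0) * \<phi> x 0 \<partial>lborel)
      + integral\<^sup>L (lebesgue_on (Q_T T)) (\<lambda>(x, t). remainder x t)"
    by (simp add: integral_time_part integral_space_part)
  finally show "0 \<le> integral\<^sup>L (lebesgue_on (Q_T T)) (\<lambda>(x, t). integrand x t) + (\<integral>x. \<eta> (S 0) * \<phi> x 0 \<partial>lborel)"
    using Bochner_Integration.integral_nonneg[of "lebesgue_on (Q_T T)" "\<lambda>(x, t). remainder x t"]
      remainder_nonneg by (auto simp: Q_T_def)
qed

end

lemma sqrt_affine_time_measurable:
  "(\<lambda>(x, t). sqrt (2 * c1 * t + c2)) \<in> borel_measurable (lebesgue_on (Q_T T))"
proof -
  have "continuous_on (Q_T T) (\<lambda>(x, t). sqrt (2 * c1 * t + c2))"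
    unfolding case_prod_beta by (intro continuous_intros)
  then show ?thesis
    using Q_T_borel by (intro continuous_imp_measurable_on_sets_lebesgue) auto
qed

lemma sqrt_affine_time_bounded:
  assumes "0 \<le> c1" "0 \<le> c2"
  shows "\<exists>M. AE p in lebesgue_on (Q_T T). \<bar>(\<lambda>(x, t). sqrt (2 * c1 * t + c2)) p\<bar> \<le> M"
proof -
  have "\<bar>sqrt (2 * c1 * t + c2)\<bar> \<le> sqrt (2 * c1 * T + c2)" if "(x, t) \<in> Q_T T" for x t
  proof -
    have "0 \<le> 2 * c1 * t" "2 * c1 * t \<le> 2 * c1 * T"
      using that assms(1) by (auto simp: Q_T_def intro: mult_left_mono)
    then show ?thesis using assms(2) by simp
  qed
  then show ?thesis by (intro exI AE_I2) auto
qed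

lemma entropy_supersol_spatially_homogeneous:
  fixes g gx G Gx :: "real \<Rightarrow> real \<Rightarrow> real" and f :: "real \<Rightarrow> real"
  assumes "0 < T" and "0 \<le> c1" and "1 \<le> c2"
    and f: "\<And>u. 1 \<le> u \<Longrightarrow> f u = 1 / u"
    and G_cont: "continuous_on (UNIV \<times> {0..}) (\<lambda>(x, t). G x t)"
    and Gx_cont: "continuous_on (UNIV \<times> {0..}) (\<lambda>(x, t). Gx x t)"
    and G_deriv: "\<And>x t. 0 < t \<Longrightarrow> ((\<lambda>y. G y t) has_real_derivative Gx x t) (at x)"
    and Gx_ge: "\<And>x t. 0 < t \<Longrightarrow> - c1 \<le> Gx x t"
    and g: "\<And>x t. 0 < t \<Longrightarrow> g x t = G x t" and gx: "\<And>x t. 0 < t \<Longrightarrow> gx x t = Gx x t"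
  shows "entropy_supersol T g gx f (\<lambda>x t. sqrt (2 * c1 * t + c2)) (\<lambda>x. sqrt c2)"
  unfolding entropy_supersol_def
proof (intro conjI allI impI)
  show "(\<lambda>(x, t). sqrt (2 * c1 * t + c2)) \<in> borel_measurable (lebesgue_on (Q_T T))"
    by (rule sqrt_affine_time_measurable)
  show "\<exists>M. AE p in lebesgue_on (Q_T T). \<bar>(\<lambda>(x, t). sqrt (2 * c1 * t + c2)) p\<bar> \<le> M"
    using \<open>0 \<le> c1\<close> \<open>1 \<le> c2\<close> by (intro sqrt_affine_time_bounded) auto
next
  fix \<phi> \<phi>x \<phi>t :: "real \<Rightarrow> real \<Rightarrow> real" and \<eta> \<eta>' \<Phi> :: "real \<Rightarrow> real"
  assume \<phi>: "test_fun T \<phi> \<phi>x \<phi>t" and \<eta>: "entropy_pair f \<eta> \<eta>' \<Phi>"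
  obtain K where K: "compact K" "K \<subseteq> UNIV \<times> {0..<T}"
    "\<And>x t. t \<in> {0..<T} \<Longrightarrow> (x, t) \<notin> K \<Longrightarrow> \<phi> x t = 0 \<and> \<phi>x x t = 0 \<and> \<phi>t x t = 0"
    using test_fun_support[OF \<phi>] by blast
  have \<Phi>_cont: "continuous_on UNIV \<Phi>"
    using \<eta> unfolding entropy_pair_def by (meson DERIV_isCont continuous_at_imp_continuous_on)
  interpret homogeneous_entropy_data T c1 c2 G Gx \<phi> \<phi>x \<phi>t K \<eta> \<eta>' \<Phi>
    using assms \<phi> K \<eta> \<Phi>_cont unfolding entropy_pair_def by unfold_locales auto
  let ?F = "\<lambda>(x, t). \<eta> (sqrt (2 * c1 * t + c2)) * \<phi>t x t + \<Phi> (sqrt (2 * c1 * t + c2)) * g x t * \<phi>x x t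
    + (\<Phi> (sqrt (2 * c1 * t + c2)) - f (sqrt (2 * c1 * t + c2)) * \<eta>' (sqrt (2 * c1 * t + c2))) * gx x t * \<phi> x t"
  have F_eq: "?F p = (\<lambda>(x, t). integrand x t) p" if "p \<in> space (lebesgue_on (Q_T T))" for p
  proof -
    obtain x t where p: "p = (x, t)" by (cases p)
    with that have "0 < t" by (simp add: Q_T_def)
    then have "f (S t) = 1 / S t" using f S_ge_1[of t] by simp
    with \<open>0 < t\<close> show ?thesis unfolding p integrand_def by (simp add: S_def g gx)
  qed
  have S0: "sqrt c2 = S 0" by (simp add: S_def)
  have initial_measurable: "(\<lambda>x. \<eta> (S 0) * \<phi> x 0) \<in> borel_measurable lborel"
    using integrable_initial_term by (rule borel_measurable_integrable)
  have initial: "integrable lebesgue (\<lambda>x. \<eta> (S 0) * \<phi> x 0)"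
    by (subst integrable_completion[OF initial_measurable]) (rule integrable_initial_term)
  note initial_integral = integral_completion[OF initial_measurable]
  have F_integrable: "integrable (lebesgue_on (Q_T T)) ?F"
    using Bochner_Integration.integrable_cong[OF refl F_eq] entropy_inequality(1) by (rule iffD2)
  have F_integral: "integral\<^sup>L (lebesgue_on (Q_T T)) ?F = integral\<^sup>L (lebesgue_on (Q_T T)) (\<lambda>(x, t). integrand x t)"
    by (rule Bochner_Integration.integral_cong[OF refl F_eq])
  show "let h = \<lambda>u. \<Phi> u - f u * \<eta>' u;
      F = \<lambda>(x, t). \<eta> (sqrt (2 * c1 * t + c2)) * \<phi>t x t + \<Phi> (sqrt (2 * c1 * t + c2)) * g x t * \<phi>x x t
        + h (sqrt (2 * c1 * t + c2)) * gx x t * \<phi> x t;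
      G = \<lambda>x. \<eta> (sqrt c2) * \<phi> x 0
    in integrable (lebesgue_on (Q_T T)) F \<and> integrable lebesgue G
      \<and> 0 \<le> integral\<^sup>L (lebesgue_on (Q_T T)) F + integral\<^sup>L lebesgue G"
    unfolding Let_def S0 F_integral initial_integral
    by (intro conjI F_integrable initial entropy_inequality(2))
qed

theorem lemma5p6:
  fixes T \<epsilon> :: real and \<kappa>0 \<rho>0 :: "real \<Rightarrow> real" and \<rho> :: "real \<Rightarrow> real \<Rightarrow> real"
  assumes "T > 0" and "0 < \<epsilon>" and "\<epsilon> \<le> 1"
    and "Lip_I \<kappa>0" and "C0_inf_I \<rho>0" and "heat_solution \<rho> \<rho>0"
  shows "let c1 = Linf_I (\<lambda>x. ((deriv ^^ 2) \<rho>0 x)\<^sup>2)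
                  + Linf_I (deriv \<rho>0) * Linf_I ((deriv ^^ 3) \<rho>0);
             c2 = (Linf_I (deriv \<kappa>0) + 1)\<^sup>2;
             Sbar = (\<lambda>(x::real) (t::real). sqrt (2 * c1 * t + c2))
         in entropy_supersol T (g_hat \<rho>) (\<lambda>x t. deriv (\<lambda>y. g_hat \<rho> y t) x) (f_a \<epsilon>) Sbar
              (\<lambda>x. Linf_I (deriv \<kappa>0) + 1)"
proof -
  obtain a b where "smooth_bump \<rho>0 a b"
    using \<open>C0_inf_I \<rho>0\<close> unfolding C0_inf_I_def smooth_bump_def by blast
  then interpret smooth_bump \<rho>0 a b .
  define L where "L = Linf_I (deriv \<kappa>0)"
  define c1 where "c1 = Linf_I (\<lambda>x. ((deriv ^^ 2) \<rho>0 x)\<^sup>2) + Linf_I (deriv \<rho>0) * Linf_I ((deriv ^^ 3) \<rho>0)"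
  have "0 \<le> L" "0 \<le> c1" unfolding L_def c1_def by (simp_all add: Linf_I_nonneg)
  have "entropy_supersol T (g_hat \<rho>) (\<lambda>x t. deriv (\<lambda>y. g_hat \<rho> y t) x) (f_a \<epsilon>)
      (\<lambda>x t. sqrt (2 * c1 * t + (L + 1)\<^sup>2)) (\<lambda>x. sqrt ((L + 1)\<^sup>2))"
  proof (rule entropy_supersol_spatially_homogeneous[where G="g_heat \<rho>0" and Gx="g_heat_x \<rho>0"])
    show "1 \<le> (L + 1)\<^sup>2" using \<open>0 \<le> L\<close> by (intro one_le_power) simp
    show "f_a \<epsilon> u = 1 / u" if "1 \<le> u" for u using \<open>\<epsilon> \<le> 1\<close> that by (simp add: f_a_def)
    show "- c1 \<le> g_heat_x \<rho>0 x t" for x t using g_heat_x_ge unfolding c1_def by simp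
  qed (use \<open>T > 0\<close> \<open>0 \<le> c1\<close> continuous_on_g_heat continuous_on_g_heat_x g_heat_has_derivative_x
      g_hat_eq_g_heat[OF \<open>heat_solution \<rho> \<rho>0\<close>] deriv_g_hat_eq_g_heat_x[OF \<open>heat_solution \<rho> \<rho>0\<close>] in auto)
  then show ?thesis using \<open>0 \<le> L\<close> unfolding Let_def L_def c1_def by simp
qed

end
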